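(* Suppose Assumptions 1–5 hold. For each $\alpha\in A$ and $T$, let $(\hat\beta_{T\alpha q},\hat\pi_{T\alpha q},\hat\varpi_{T\alpha q})\in B\times\Pi_\alpha$ be such that $\hat{\boldsymbol\lambda}_{T\alpha q}:=T^{1/2}\boldsymbol\theta(\alpha,\hat\beta_{T\alpha q},\hat\pi_{T\alpha q},\hat\varpi_{T\alpha q})$ satisfies $$(\hat{\boldsymbol\lambda}_{T\alpha q}-Z_{T\alpha})'\mathcal I_\alpha(\hat{\boldsymbol\lambda}_{T\alpha q}-Z_{T\alpha})=\inf_{\boldsymbol\lambda\in\Theta_{\alpha,T}}\{(\boldsymbol\lambda-Z_{T\alpha})'\mathcal I_\alpha(\boldsymbol\lambda-Z_{T\alpha})\}+o_{p\alpha}(1).$$ Then $$L^\pi_T(\alpha,\hat\beta_{T\alpha},\hat\pi_{T\alpha},\hat\varpi_{T\alpha})-L^\pi_T(\alpha,\beta^*,\pi^*,0)=\tfrac12Z_{T\alpha}'\mathcal I_\alpha Z_{T\alpha}-\tfrac12(\hat{\boldsymbol\lambda}_{T\alpha q}-Z_{T\alpha})'\mathcal I_\alpha(\hat{\boldsymbol\lambda}_{T\alpha q}-Z_{T\alpha})+o_{p\alpha}(1).$$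
   Context: Setting. Fix an integer $p\ge1$. $\{y_t\}$ is a real-valued time series observed for $t=-p+1,\dots,T$; write $\boldsymbol y_{t-1}=(y_{t-1},\dots,y_{t-p})$ and $\mathcal F_t=\sigma(y_s,\ s\le t)$. For $\tilde\phi=(\tilde\phi_0,\tilde\phi_1,\dots,\tilde\phi_p,\tilde\sigma^2)\in\mathbb R^{p+1}\times(0,\infty)$ let $f_t(\tilde\phi)=\tilde\sigma^{-1}\mathfrak N\big((y_t-\tilde\phi_0-\sum_{i=1}^p\tilde\phi_iy_{t-i})/\tilde\sigma\big)$ with $\mathfrak N(u)=(2\pi)^{-1/2}e^{-u^2/2}$; $\nabla f_t$ denotes the gradient with respect to $\tilde\phi$. Integers $q_1\ge0$, $q_2\ge1$ with $q_1+q_2=p+2$ and a known $(p+2)\times(p+2)$ permutation matrix $P$ are fixed; for $\beta\in\mathbb R^{q_1},\phi\in\mathbb R^{q_2}$ write $f_t(\beta,\phi)=f_t(P^{-1}(\beta,\phi))$. Given a mixing weight $\alpha_t(\alpha,\beta,\phi,\varphi)$ depending on an additional parameter $\alpha$, the two-regime mixture autoregressive log-likelihood is $L_T(\alpha,\beta,\phi,\varphi)=\sum_{t=1}^T\log[\alpha_tf_t(\beta,\phi)+(1-\alpha_t)f_t(\beta,\varphi)]$; the null (linear AR) log-likelihood is $L^0_T(\tilde\phi)=\sum_{t=1}^T\log f_t(\tilde\phi)$. Let $\hat{\tilde\phi}_T$ satisfy $L^0_T(\hat{\tilde\phi}_T)=\sup_{\tilde\phi\in\tilde\Phi}L^0_T(\tilde\phi)+o_p(1)$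 and $\hat{\tilde\phi}_T=\tilde\phi^*+o_p(1)$. Define $LR_T(\alpha)=2[\sup_{(\beta,\phi,\varphi)\in B\times\Phi\times\Phi}L_T(\alpha,\beta,\phi,\varphi)-\sup_{\tilde\phi\in\tilde\Phi}L^0_T(\tilde\phi)]$ and $LR_T=\sup_{\alpha\in A}LR_T(\alpha)$. Notation. For random quantities $X_{T\alpha}$ indexed by $\alpha\in A$, $X_{T\alpha}=o_{p\alpha}(1)$ (resp. $O_{p\alpha}(1)$) means $\sup_{\alpha\in A}\|X_{T\alpha}\|=o_p(1)$ (resp. $O_p(1)$). $\mathcal B(A,\mathbb R^k)$ (resp. $\mathcal C(A,\mathbb R^k)$) is the space of bounded (resp. continuous) $\mathbb R^k$-valued functions on $A$ with the uniform metric; $\Rightarrow$ denotes weak convergence of processes in such spaces. A set $\Lambda\subset\mathbb R^r$ is a cone if $\lambda\in\Lambda$ implies $a\lambda\in\Lambda$ for all real $a>0$. A collection $\{\Gamma_\alpha,\alpha\in A\}$ of subsets of $\mathbb R^r$ is locally uniformly equal to $\Lambda\subset\mathbb R^r$ if there is $\delta>0$ with $\Gamma_\alpha\cap(-\delta,\delta)^r=\Lambda\cap(-\delta,\delta)^r$ for all $\alpha\in A$. $\lambda_{\min},\lambda_{\max}$ denote smallest/largest eigenvalues. Assumption 1. (i) $y_t=\tilde\phi^*_0+\sum_{i=1}^p\tilde\phi^*_iy_{t-i}+\tilde\sigma^*\varepsilon_t$ is a stationary linear Gaussian AR($p$) process, $\varepsilon_t$ i.i.d. $N(0,1)$ with $\varepsilon_t$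 independent of $\{y_{t-j},j>0\}$, where $\tilde\phi^*$ is an interior point of a compact set $\tilde\Phi\subset\{\tilde\phi:\tilde\phi_0\in\mathbb R,\ 1-\sum_{i=1}^p\tilde\phi_iz^i\ne0\text{ for }|z|\le1,\ \tilde\sigma^2\in(0,\infty)\}$. (ii) The parameter space of $(\alpha,\beta,\phi,\varphi)$ is $A\times B\times\Phi\times\Phi$ with $A\subset\mathbb R^a$ compact and $B\subset\mathbb R^{q_1}$, $\Phi\subset\mathbb R^{q_2}$ compact such that $(\beta,\phi)\in B\times\Phi$ iff $P^{-1}(\beta,\phi)\in\tilde\Phi$; write $(\beta^*,\phi^* )=P\tilde\phi^*$. (iii) For all $t$ and all parameter values, $\alpha_t(\alpha,\beta,\phi,\varphi)$ is $\sigma(\boldsymbol y_{t-1})$-measurable and lies in $(0,1)$. Assumption 2. For each $\alpha\in A$, estimators $(\hat\beta_{T\alpha},\hat\phi_{T\alpha},\hat\varphi_{T\alpha})\in B\times\Phi\times\Phi$ satisfy (i) $L_T(\alpha,\hat\beta_{T\alpha},\hat\phi_{T\alpha},\hat\varphi_{T\alpha})=\sup_{(\beta,\phi,\varphi)\in B\times\Phi\times\Phi}L_T(\alpha,\beta,\phi,\varphi)+o_{p\alpha}(1)$ and (ii) $(\hat\beta_{T\alpha},\hat\phi_{T\alpha},\hat\varphi_{T\alpha})=(\beta^*,\phi^*,\phi^* )+o_{p\alpha}(1)$. Assumption 3. (i) For every $\alpha\in A$ the map $(\pi,\varpi)=\boldsymbol\pi_\alpha(\phi,\varphi)$ from $\Phi\times\Phi$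 onto $\Pi_\alpha:=\boldsymbol\pi_\alpha(\Phi\times\Phi)\subset\mathbb R^{2q_2}$ is one-to-one with $\boldsymbol\pi_\alpha$ and $\boldsymbol\pi_\alpha^{-1}$ continuous. (ii) $\boldsymbol\pi_\alpha(\{(\phi,\phi):\phi\in\Phi\})=\Phi\times\{0\}$ and $\boldsymbol\pi_\alpha(\phi^*,\phi^* )=(\pi^*,0)$ with $\pi^*:=\phi^*$. (iii) $(\hat\beta_{T\alpha},\hat\pi_{T\alpha},\hat\varpi_{T\alpha})=(\beta^*,\pi^*,0)+o_{p\alpha}(1)$, where $(\hat\pi_{T\alpha},\hat\varpi_{T\alpha})=\boldsymbol\pi_\alpha(\hat\phi_{T\alpha},\hat\varphi_{T\alpha})$. The reparameterized log-likelihood is $L^\pi_T(\alpha,\beta,\pi,\varpi)=L_T(\alpha,\beta,\boldsymbol\pi_\alpha^{-1}(\pi,\varpi))$. Assumption 4. For some integer $k\ge2$ and every $\alpha\in A$, $\alpha_t(\alpha,\cdot)$ and $\boldsymbol\pi^{-1}_\alpha$ are $k$ times continuously differentiable on the interiors of $B\times\Phi\times\Phi$ and $\Pi_\alpha$, respectively. Assumption 5. For each $\alpha\in A$ and $(\beta,\pi,\varpi)\in B\times\Pi_\alpha$, with $\boldsymbol\theta=\boldsymbol\theta(\alpha,\beta,\pi,\varpi)$, $L^\pi_T(\alpha,\beta,\pi,\varpi)-L^\pi_T(\alpha,\beta^*,\pi^*,0)=(T^{-1/2}S_{T\alpha})'[T^{1/2}\boldsymbol\theta]-\tfrac12[T^{1/2}\boldsymbol\theta]'\mathcal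 I_\alpha[T^{1/2}\boldsymbol\theta]+R_T(\alpha,\beta,\pi,\varpi)$, where: (i) for each $\alpha$, $\boldsymbol\theta(\alpha,\cdot)$ maps $B\times\Pi_\alpha$ onto $\Theta_\alpha\subset\mathbb R^r$, with (a) $\boldsymbol\theta(\alpha,\beta^*,\pi^*,0)=0$ and (b) for every $\epsilon>0$ there is $\delta_\epsilon>0$ with $\inf_{\alpha\in A}\inf_{(\beta,\pi,\varpi)\in B\times\Pi_\alpha:\|(\beta,\pi,\varpi)-(\beta^*,\pi^*,0)\|\ge\epsilon}\|\boldsymbol\theta(\alpha,\beta,\pi,\varpi)\|\ge\delta_\epsilon$; (ii) $S_{T\alpha}=\sum_{t=1}^Ts_{t\alpha}$ is an $\mathbb R^r$-valued $\mathcal F_T$-measurable process indexed by $\alpha\in A$, not depending on $(\beta,\pi,\varpi)$, with sample paths continuous in $\alpha$, and $T^{-1/2}S_{T\bullet}\Rightarrow S_\bullet$ for a mean-zero $\mathbb R^r$-valued Gaussian process $\{S_\alpha:\alpha\in A\}$ with a.s. continuous sample paths and $E[S_\alpha S_\alpha']=E[s_{t\alpha}s_{t\alpha}']=\mathcal I_\alpha$; (iii) $\mathcal I_\alpha$ is a nonrandom symmetric $r\times r$ matrix not depending on $(\beta,\pi,\varpi)$, continuous in $\alpha$, with $0<\inf_{\alpha\in A}\lambda_{\min}(\mathcal I_\alpha)$ and $\sup_{\alpha\in A}\lambda_{\max}(\mathcal I_\alpha)<\infty$; (iv) for every nonrandom sequence of positive scalars $\gamma_T\to0$, $\sup_{(\beta,\pi,\varpi)\in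 B\times\Pi_\alpha:\|(\beta,\pi,\varpi)-(\beta^*,\pi^*,0)\|\le\gamma_T}|R_T(\alpha,\beta,\pi,\varpi)|/(1+\|T^{1/2}\boldsymbol\theta(\alpha,\beta,\pi,\varpi)\|)^2=o_{p\alpha}(1)$. Assumption 6. $\{\Theta_\alpha,\alpha\in A\}$ is locally uniformly equal to a cone $\Lambda\subset\mathbb R^r$. Assumption 7. With $q_\theta=q_1+q_2$ and $q_\vartheta=r-q_\theta$, $\Lambda=\mathbb R^{q_\theta}\times\Lambda_\vartheta$ for a cone $\Lambda_\vartheta\subset\mathbb R^{q_\vartheta}$. Assumption 8. Partitioning $S_{T\alpha}=(S_{T\theta\alpha},S_{T\vartheta\alpha})$ with $S_{T\theta\alpha}$ of dimension $q_\theta$, $S_{T\theta\alpha}=S^0_T:=\sum_{t=1}^T\nabla f_t(\tilde\phi^* )/f_t(\tilde\phi^* )$ for all $\alpha$. Let $\mathcal I^0=E[(\nabla f_t(\tilde\phi^* )/f_t(\tilde\phi^* ))(\nabla f_t(\tilde\phi^* )/f_t(\tilde\phi^* ))']$. Further notation. $Z_{T\alpha}=\mathcal I_\alpha^{-1}T^{-1/2}S_{T\alpha}$, $Z_\alpha=\mathcal I_\alpha^{-1}S_\alpha$. Partition $S_\alpha=(S_{\theta\alpha},S_{\vartheta\alpha})$, $Z_\alpha=(Z_{\theta\alpha},Z_{\vartheta\alpha})$, $\boldsymbol\lambda=(\boldsymbol\lambda_\theta,\boldsymbol\lambda_\vartheta)$ and $\mathcal I_\alpha$ into blocks $\mathcal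 I_{\theta\theta\alpha},\mathcal I_{\theta\vartheta\alpha},\mathcal I_{\vartheta\theta\alpha},\mathcal I_{\vartheta\vartheta\alpha}$ conformably with dimensions $q_\theta,q_\vartheta$; $(\mathcal I_\alpha^{-1})_{\vartheta\vartheta}$ is the bottom-right $q_\vartheta\times q_\vartheta$ block of $\mathcal I_\alpha^{-1}$. $\Theta_{\alpha,T}=\{T^{1/2}\boldsymbol\theta:\boldsymbol\theta\in\Theta_\alpha\}$. *)

theory Defs
  imports "HOL-Probability.Probability"
begin

text \<open>A vector of R^n is encoded as a function nat => real that vanishes at
all indices >= n.  Euclidean norm, concatenation and relative interior are
defined with respect to this encoding.\<close>

definition vec :: "nat \<Rightarrow> (nat \<Rightarrow> real) set" where
  "vec n = {v. \<forall>i\<ge>n. v i = 0}"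

definition vnorm :: "nat \<Rightarrow> (nat \<Rightarrow> real) \<Rightarrow> real" where
  "vnorm n v = sqrt (\<Sum>i<n. (v i)\<^sup>2)"

definition vzero :: "nat \<Rightarrow> real" where
  "vzero = (\<lambda>_. 0)"

definition vcat :: "nat \<Rightarrow> (nat \<Rightarrow> real) \<Rightarrow> (nat \<Rightarrow> real) \<Rightarrow> (nat \<Rightarrow> real)" where
  "vcat m a b = (\<lambda>i. if i < m then a i else b (i - m))"

definition vtake :: "nat \<Rightarrow> (nat \<Rightarrow> real) \<Rightarrow> (nat \<Rightarrow> real)" where
  "vtake m v = (\<lambda>i. if i < m then v i else 0)"

definition vdrop :: "nat \<Rightarrow> (nat \<Rightarrow> real) \<Rightarrow> (nat \<Rightarrow> real)" where
  "vdrop m v = (\<lambda>i. v (i + m))"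

definition vinterior :: "nat \<Rightarrow> (nat \<Rightarrow> real) set \<Rightarrow> (nat \<Rightarrow> real) set" where
  "vinterior n S = {x \<in> S \<inter> vec n. \<exists>e>0. \<forall>y\<in>vec n. vnorm n (\<lambda>i. y i - x i) < e \<longrightarrow> y \<in> S}"

definition dist3 :: "nat \<Rightarrow> nat \<Rightarrow> (nat \<Rightarrow> real) \<Rightarrow> (nat \<Rightarrow> real) \<Rightarrow> (nat \<Rightarrow> real)
    \<Rightarrow> (nat \<Rightarrow> real) \<Rightarrow> (nat \<Rightarrow> real) \<Rightarrow> (nat \<Rightarrow> real) \<Rightarrow> real" where
  "dist3 q1 q2 b p v b' p' v' =
     sqrt ((vnorm q1 (\<lambda>i. b i - b' i))\<^sup>2 + (vnorm q2 (\<lambda>i. p i - p' i))\<^sup>2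
           + (vnorm q2 (\<lambda>i. v i - v' i))\<^sup>2)"

text \<open>k times continuously differentiable on an (open) subset U of R^n:
all iterated partial derivatives of order <= k exist on U and are continuous.
(On subsets of vec n the product topology of nat => real is the Euclidean one.)\<close>
definition Ck_on :: "nat \<Rightarrow> nat \<Rightarrow> (nat \<Rightarrow> real) set \<Rightarrow> ((nat \<Rightarrow> real) \<Rightarrow> real) \<Rightarrow> bool" where
  "Ck_on k n U g \<longleftrightarrow> (\<exists>D :: nat list \<Rightarrow> (nat \<Rightarrow> real) \<Rightarrow> real.
      (\<forall>x\<in>U. D [] x = g x) \<and>
      (\<forall>js i x. length js < k \<and> set js \<subseteq> {..<n} \<and> i < n \<and> x \<in> U \<longrightarrow>
          ((\<lambda>h. D js (\<lambda>j. x j + (if j = i then h else 0))) has_real_derivative D (i # js) x) (at 0)) \<and>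
      (\<forall>js. length js \<le> k \<and> set js \<subseteq> {..<n} \<longrightarrow> continuous_on U (D js)))"

definition eigvals :: "real^'r^'r \<Rightarrow> real set" where
  "eigvals M = {e. \<exists>v. v \<noteq> 0 \<and> M *v v = e *\<^sub>R v}"

definition lam_min :: "real^'r^'r \<Rightarrow> real" where
  "lam_min M = Inf (eigvals M)"

definition lam_max :: "real^'r^'r \<Rightarrow> real" where
  "lam_max M = Sup (eigvals M)"

definition qform :: "real^'r^'r \<Rightarrow> real^'r \<Rightarrow> real" where
  "qform M v = v \<bullet> (M *v v)"

text \<open>Outer-probability version of "the events E T e have vanishing probability":
for all e, d > 0, eventually E T e is contained in a measurable set of probability < d.\<close>
definition vanish_p :: "'w measure \<Rightarrow> (nat \<Rightarrow> real \<Rightarrow> 'w set) \<Rightarrow> bool" where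
  "vanish_p M E \<longleftrightarrow> (\<forall>e>0. \<forall>d>0. eventually
      (\<lambda>T. \<exists>F\<in>sets M. measure M F < d \<and> E T e \<inter> space M \<subseteq> F) sequentially)"

text \<open>X_{T alpha} = o_{p alpha}(1): sup over alpha in A of |X_{T alpha}| is o_p(1).\<close>
definition op_unif :: "'w measure \<Rightarrow> 'a set \<Rightarrow> (nat \<Rightarrow> 'a \<Rightarrow> 'w \<Rightarrow> real) \<Rightarrow> bool" where
  "op_unif M A X \<longleftrightarrow> vanish_p M (\<lambda>T e. {\<omega>. \<exists>a\<in>A. \<bar>X T a \<omega>\<bar> > e})"

text \<open>Weak convergence of the processes X_T (on M) to Y (on N) in the space of
bounded functions on A with the uniform metric.\<close>
definition weak_conv_unif ::
  "'a set \<Rightarrow> 'w measure \<Rightarrow> (nat \<Rightarrow> 'a \<Rightarrow> 'w \<Rightarrow> 'b::real_normed_vector) \<Rightarrow> 'v measure \<Rightarrow> ('a \<Rightarrow> 'v \<Rightarrow> 'b) \<Rightarrow> bool" where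
  "weak_conv_unif A M X N Y \<longleftrightarrow> (\<forall>h :: ('a \<Rightarrow> 'b) \<Rightarrow> real.
      ((\<exists>K. \<forall>f. \<bar>h f\<bar> \<le> K) \<and>
       (\<forall>f g. (\<forall>a\<in>A. f a = g a) \<longrightarrow> h f = h g) \<and>
       (\<forall>f. (\<exists>K. \<forall>a\<in>A. norm (f a) \<le> K) \<longrightarrow>
          (\<forall>e>0. \<exists>d>0. \<forall>g. (\<exists>K. \<forall>a\<in>A. norm (g a) \<le> K) \<longrightarrow>
              (\<forall>a\<in>A. norm (f a - g a) < d) \<longrightarrow> \<bar>h f - h g\<bar> < e)))
      \<longrightarrow> ((\<lambda>T. \<integral>\<omega>. h (\<lambda>a. X T a \<omega>) \<partial>M) \<longlonglongrightarrow> (\<integral>\<omega>. h (\<lambda>a. Y a \<omega>) \<partial>N)))"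

definition centered_normal :: "'v measure \<Rightarrow> ('v \<Rightarrow> real) \<Rightarrow> bool" where
  "centered_normal N X \<longleftrightarrow> X \<in> borel_measurable N \<and>
     ((AE \<omega> in N. X \<omega> = 0) \<or>
      (\<exists>\<sigma>>0. distributed N lborel X (\<lambda>x. ennreal (normal_density 0 \<sigma> x))))"

definition gaussian_process :: "'a set \<Rightarrow> 'v measure \<Rightarrow> ('a \<Rightarrow> 'v \<Rightarrow> real^'r) \<Rightarrow> bool" where
  "gaussian_process A N Y \<longleftrightarrow> (\<forall>F (c :: 'a \<Rightarrow> real^'r). finite F \<and> F \<subseteq> A \<longrightarrow>
      centered_normal N (\<lambda>\<omega>. \<Sum>a\<in>F. c a \<bullet> Y a \<omega>))"

definition stationary_proc :: "'w measure \<Rightarrow> (int \<Rightarrow> 'w \<Rightarrow> real) \<Rightarrow> bool" where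
  "stationary_proc M y \<longleftrightarrow> (\<forall>k J. finite J \<longrightarrow>
      distr M (PiM J (\<lambda>_. borel)) (\<lambda>\<omega>. \<lambda>j\<in>J. y (j + k) \<omega>)
    = distr M (PiM J (\<lambda>_. borel)) (\<lambda>\<omega>. \<lambda>j\<in>J. y j \<omega>))"

definition past_sigma :: "'w measure \<Rightarrow> (int \<Rightarrow> 'w \<Rightarrow> real) \<Rightarrow> int \<Rightarrow> 'w measure" where
  "past_sigma M y T = sigma (space M) {y s -` X \<inter> space M | s X. s \<le> T \<and> X \<in> sets borel}"

definition lag_sigma :: "'w measure \<Rightarrow> (int \<Rightarrow> 'w \<Rightarrow> real) \<Rightarrow> nat \<Rightarrow> int \<Rightarrow> 'w measure" where
  "lag_sigma M y p t = sigma (space M) {y (t - int i) -` X \<inter> space M | i X. i \<in> {1..p} \<and> X \<in> sets borel}"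

definition ar_root_cond :: "nat \<Rightarrow> (nat \<Rightarrow> real) \<Rightarrow> bool" where
  "ar_root_cond p ph \<longleftrightarrow>
     (\<forall>z::complex. cmod z \<le> 1 \<longrightarrow> 1 - (\<Sum>i=1..p. complex_of_real (ph i) * z ^ i) \<noteq> 0)"

definition Pmap :: "(nat \<Rightarrow> nat) \<Rightarrow> (nat \<Rightarrow> real) \<Rightarrow> (nat \<Rightarrow> real)" where
  "Pmap sg v = (\<lambda>i. v (sg i))"

definition Pinv :: "(nat \<Rightarrow> nat) \<Rightarrow> (nat \<Rightarrow> real) \<Rightarrow> (nat \<Rightarrow> real)" where
  "Pinv sg w = (\<lambda>i. w (inv sg i))"

text \<open>f_t(phi~) for a parameter vector phi~ = (phi_0,...,phi_p,sigma^2)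
(indices 0..p+1) and a sample path yy.\<close>
definition ftd :: "nat \<Rightarrow> (int \<Rightarrow> real) \<Rightarrow> int \<Rightarrow> (nat \<Rightarrow> real) \<Rightarrow> real" where
  "ftd p yy t ph = (let s = sqrt (ph (Suc p)) in
      std_normal_density ((yy t - ph 0 - (\<Sum>i=1..p. ph i * yy (t - int i))) / s) / s)"

definition LT :: "nat \<Rightarrow> (nat \<Rightarrow> nat) \<Rightarrow> nat \<Rightarrow> (int \<Rightarrow> 'w \<Rightarrow> real)
    \<Rightarrow> (int \<Rightarrow> 'a \<Rightarrow> (nat \<Rightarrow> real) \<Rightarrow> (nat \<Rightarrow> real) \<Rightarrow> (nat \<Rightarrow> real) \<Rightarrow> 'w \<Rightarrow> real)
    \<Rightarrow> nat \<Rightarrow> 'a \<Rightarrow> (nat \<Rightarrow> real) \<Rightarrow> (nat \<Rightarrow> real) \<Rightarrow> (nat \<Rightarrow> real) \<Rightarrow> 'w \<Rightarrow> real" where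
  "LT p sg q1 y mw T a b ph vp \<omega> =
     (\<Sum>t\<in>{1..int T}.
        ln (mw t a b ph vp \<omega> * ftd p (\<lambda>s. y s \<omega>) t (Pinv sg (vcat q1 b ph))
            + (1 - mw t a b ph vp \<omega>) * ftd p (\<lambda>s. y s \<omega>) t (Pinv sg (vcat q1 b vp))))"

definition LpiT :: "nat \<Rightarrow> (nat \<Rightarrow> nat) \<Rightarrow> nat \<Rightarrow> (int \<Rightarrow> 'w \<Rightarrow> real)
    \<Rightarrow> (int \<Rightarrow> 'a \<Rightarrow> (nat \<Rightarrow> real) \<Rightarrow> (nat \<Rightarrow> real) \<Rightarrow> (nat \<Rightarrow> real) \<Rightarrow> 'w \<Rightarrow> real)
    \<Rightarrow> ('a \<Rightarrow> (nat \<Rightarrow> real) \<times> (nat \<Rightarrow> real) \<Rightarrow> (nat \<Rightarrow> real) \<times> (nat \<Rightarrow> real))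
    \<Rightarrow> nat \<Rightarrow> 'a \<Rightarrow> (nat \<Rightarrow> real) \<Rightarrow> (nat \<Rightarrow> real) \<Rightarrow> (nat \<Rightarrow> real) \<Rightarrow> 'w \<Rightarrow> real" where
  "LpiT p sg q1 y mw piinv T a b pp vv \<omega> =
     LT p sg q1 y mw T a b (fst (piinv a (pp, vv))) (snd (piinv a (pp, vv))) \<omega>"

definition bstar :: "(nat \<Rightarrow> nat) \<Rightarrow> nat \<Rightarrow> (nat \<Rightarrow> real) \<Rightarrow> (nat \<Rightarrow> real)" where
  "bstar sg q1 phs = vtake q1 (Pmap sg phs)"

definition phstar :: "(nat \<Rightarrow> nat) \<Rightarrow> nat \<Rightarrow> (nat \<Rightarrow> real) \<Rightarrow> (nat \<Rightarrow> real)" where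
  "phstar sg q1 phs = vdrop q1 (Pmap sg phs)"

definition Setting :: "nat \<Rightarrow> nat \<Rightarrow> nat \<Rightarrow> (nat \<Rightarrow> nat) \<Rightarrow> bool" where
  "Setting p q1 q2 sg \<longleftrightarrow> p \<ge> 1 \<and> q2 \<ge> 1 \<and> q1 + q2 = p + 2 \<and> sg permutes {..<p+2}"

definition Assumption1 :: "'w measure \<Rightarrow> nat \<Rightarrow> nat \<Rightarrow> nat \<Rightarrow> (nat \<Rightarrow> nat)
    \<Rightarrow> (int \<Rightarrow> 'w \<Rightarrow> real) \<Rightarrow> (int \<Rightarrow> 'w \<Rightarrow> real) \<Rightarrow> (nat \<Rightarrow> real) \<Rightarrow> (nat \<Rightarrow> real) set
    \<Rightarrow> 'a::euclidean_space set \<Rightarrow> (nat \<Rightarrow> real) set \<Rightarrow> (nat \<Rightarrow> real) set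
    \<Rightarrow> (int \<Rightarrow> 'a \<Rightarrow> (nat \<Rightarrow> real) \<Rightarrow> (nat \<Rightarrow> real) \<Rightarrow> (nat \<Rightarrow> real) \<Rightarrow> 'w \<Rightarrow> real) \<Rightarrow> bool" where
  "Assumption1 M p q1 q2 sg y eps phs PhiT A B Phi mw \<longleftrightarrow>
     \<comment> \<open>(i)\<close>
     prob_space M \<and>
     (\<forall>t. y t \<in> borel_measurable M) \<and>
     (\<forall>t. distributed M lborel (eps t) (\<lambda>x. ennreal (std_normal_density x))) \<and>
     prob_space.indep_vars M (\<lambda>_. borel) eps UNIV \<and>
     (\<forall>t. prob_space.indep_set M
        (sigma_sets (space M) {eps t -` X \<inter> space M | X. X \<in> sets borel})
        (sigma_sets (space M) {y j -` X \<inter> space M | j X. j < t \<and> X \<in> sets borel})) \<and>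
     (\<forall>t. \<forall>\<omega>\<in>space M. y t \<omega> = phs 0 + (\<Sum>i=1..p. phs i * y (t - int i) \<omega>) + sqrt (phs (Suc p)) * eps t \<omega>) \<and>
     stationary_proc M y \<and>
     PhiT \<subseteq> vec (p + 2) \<and> compact PhiT \<and>
     (\<forall>ph\<in>PhiT. ar_root_cond p ph \<and> ph (Suc p) > 0) \<and>
     phs \<in> vinterior (p + 2) PhiT \<and>
     \<comment> \<open>(ii)\<close>
     compact A \<and> B \<subseteq> vec q1 \<and> Phi \<subseteq> vec q2 \<and> compact B \<and> compact Phi \<and>
     (\<forall>b\<in>vec q1. \<forall>ph\<in>vec q2. (b \<in> B \<and> ph \<in> Phi) \<longleftrightarrow> Pinv sg (vcat q1 b ph) \<in> PhiT) \<and>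
     \<comment> \<open>(iii)\<close>
     (\<forall>t. \<forall>a\<in>A. \<forall>b\<in>B. \<forall>ph\<in>Phi. \<forall>vp\<in>Phi.
        mw t a b ph vp \<in> borel_measurable (lag_sigma M y p t) \<and>
        (\<forall>\<omega>\<in>space M. 0 < mw t a b ph vp \<omega> \<and> mw t a b ph vp \<omega> < 1))"

definition Assumption2 :: "'w measure \<Rightarrow> nat \<Rightarrow> nat \<Rightarrow> nat \<Rightarrow> (nat \<Rightarrow> nat)
    \<Rightarrow> (int \<Rightarrow> 'w \<Rightarrow> real) \<Rightarrow> (nat \<Rightarrow> real)
    \<Rightarrow> 'a set \<Rightarrow> (nat \<Rightarrow> real) set \<Rightarrow> (nat \<Rightarrow> real) set
    \<Rightarrow> (int \<Rightarrow> 'a \<Rightarrow> (nat \<Rightarrow> real) \<Rightarrow> (nat \<Rightarrow> real) \<Rightarrow> (nat \<Rightarrow> real) \<Rightarrow> 'w \<Rightarrow> real)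
    \<Rightarrow> (nat \<Rightarrow> 'a \<Rightarrow> 'w \<Rightarrow> (nat \<Rightarrow> real)) \<Rightarrow> (nat \<Rightarrow> 'a \<Rightarrow> 'w \<Rightarrow> (nat \<Rightarrow> real))
    \<Rightarrow> (nat \<Rightarrow> 'a \<Rightarrow> 'w \<Rightarrow> (nat \<Rightarrow> real)) \<Rightarrow> bool" where
  "Assumption2 M p q1 q2 sg y phs A B Phi mw bh phh vph \<longleftrightarrow>
     (\<forall>T. \<forall>a\<in>A. \<forall>\<omega>\<in>space M. bh T a \<omega> \<in> B \<and> phh T a \<omega> \<in> Phi \<and> vph T a \<omega> \<in> Phi) \<and>
     op_unif M A (\<lambda>T a \<omega>. LT p sg q1 y mw T a (bh T a \<omega>) (phh T a \<omega>) (vph T a \<omega>) \<omega>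
                        - (SUP x\<in>B \<times> Phi \<times> Phi. LT p sg q1 y mw T a (fst x) (fst (snd x)) (snd (snd x)) \<omega>)) \<and>
     op_unif M A (\<lambda>T a \<omega>. dist3 q1 q2 (bh T a \<omega>) (phh T a \<omega>) (vph T a \<omega>)
                        (bstar sg q1 phs) (phstar sg q1 phs) (phstar sg q1 phs))"

definition Assumption3 :: "'w measure \<Rightarrow> nat \<Rightarrow> nat \<Rightarrow> (nat \<Rightarrow> nat) \<Rightarrow> (nat \<Rightarrow> real)
    \<Rightarrow> 'a set \<Rightarrow> (nat \<Rightarrow> real) set
    \<Rightarrow> ('a \<Rightarrow> (nat \<Rightarrow> real) \<times> (nat \<Rightarrow> real) \<Rightarrow> (nat \<Rightarrow> real) \<times> (nat \<Rightarrow> real))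
    \<Rightarrow> ('a \<Rightarrow> (nat \<Rightarrow> real) \<times> (nat \<Rightarrow> real) \<Rightarrow> (nat \<Rightarrow> real) \<times> (nat \<Rightarrow> real))
    \<Rightarrow> (nat \<Rightarrow> 'a \<Rightarrow> 'w \<Rightarrow> (nat \<Rightarrow> real)) \<Rightarrow> (nat \<Rightarrow> 'a \<Rightarrow> 'w \<Rightarrow> (nat \<Rightarrow> real))
    \<Rightarrow> (nat \<Rightarrow> 'a \<Rightarrow> 'w \<Rightarrow> (nat \<Rightarrow> real)) \<Rightarrow> bool" where
  "Assumption3 M q1 q2 sg phs A Phi pimap piinv bh phh vph \<longleftrightarrow>
     (\<forall>a\<in>A. homeomorphism (Phi \<times> Phi) (pimap a ` (Phi \<times> Phi)) (pimap a) (piinv a) \<and>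
             pimap a ` (Phi \<times> Phi) \<subseteq> vec q2 \<times> vec q2 \<and>
             pimap a ` {(ph, ph) | ph. ph \<in> Phi} = Phi \<times> {vzero} \<and>
             pimap a (phstar sg q1 phs, phstar sg q1 phs) = (phstar sg q1 phs, vzero)) \<and>
     op_unif M A (\<lambda>T a \<omega>. dist3 q1 q2 (bh T a \<omega>)
                          (fst (pimap a (phh T a \<omega>, vph T a \<omega>))) (snd (pimap a (phh T a \<omega>, vph T a \<omega>)))
                          (bstar sg q1 phs) (phstar sg q1 phs) vzero)"

definition Assumption4 :: "'w measure \<Rightarrow> nat \<Rightarrow> nat \<Rightarrow> 'a set \<Rightarrow> (nat \<Rightarrow> real) set \<Rightarrow> (nat \<Rightarrow> real) set
    \<Rightarrow> (int \<Rightarrow> 'a \<Rightarrow> (nat \<Rightarrow> real) \<Rightarrow> (nat \<Rightarrow> real) \<Rightarrow> (nat \<Rightarrow> real) \<Rightarrow> 'w \<Rightarrow> real)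
    \<Rightarrow> ('a \<Rightarrow> (nat \<Rightarrow> real) \<times> (nat \<Rightarrow> real) \<Rightarrow> (nat \<Rightarrow> real) \<times> (nat \<Rightarrow> real))
    \<Rightarrow> ('a \<Rightarrow> (nat \<Rightarrow> real) \<times> (nat \<Rightarrow> real) \<Rightarrow> (nat \<Rightarrow> real) \<times> (nat \<Rightarrow> real)) \<Rightarrow> bool" where
  "Assumption4 M q1 q2 A B Phi mw pimap piinv \<longleftrightarrow>
     (\<exists>k::nat. k \<ge> 2 \<and> (\<forall>a\<in>A.
        (\<forall>t. \<forall>\<omega>\<in>space M.
           Ck_on k (q1 + 2 * q2)
             (vinterior (q1 + 2 * q2) ((\<lambda>(b, ph, vp). vcat q1 b (vcat q2 ph vp)) ` (B \<times> Phi \<times> Phi)))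
             (\<lambda>v. mw t a (vtake q1 v) (vtake q2 (vdrop q1 v)) (vdrop (q1 + q2) v) \<omega>)) \<and>
        (\<forall>j < 2 * q2.
           Ck_on k (2 * q2)
             (vinterior (2 * q2) ((\<lambda>(pp, vv). vcat q2 pp vv) ` (pimap a ` (Phi \<times> Phi))))
             (\<lambda>v. vcat q2 (fst (piinv a (vtake q2 v, vdrop q2 v))) (snd (piinv a (vtake q2 v, vdrop q2 v))) j))))"

definition ST :: "(nat \<Rightarrow> 'a \<Rightarrow> 'w \<Rightarrow> real^'r) \<Rightarrow> nat \<Rightarrow> 'a \<Rightarrow> 'w \<Rightarrow> real^'r" where
  "ST s T a \<omega> = (\<Sum>t\<in>{1..T}. s t a \<omega>)"

definition RT :: "nat \<Rightarrow> (nat \<Rightarrow> nat) \<Rightarrow> nat \<Rightarrow> (int \<Rightarrow> 'w \<Rightarrow> real)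
    \<Rightarrow> (int \<Rightarrow> 'a \<Rightarrow> (nat \<Rightarrow> real) \<Rightarrow> (nat \<Rightarrow> real) \<Rightarrow> (nat \<Rightarrow> real) \<Rightarrow> 'w \<Rightarrow> real)
    \<Rightarrow> ('a \<Rightarrow> (nat \<Rightarrow> real) \<times> (nat \<Rightarrow> real) \<Rightarrow> (nat \<Rightarrow> real) \<times> (nat \<Rightarrow> real))
    \<Rightarrow> (nat \<Rightarrow> real) \<Rightarrow> ('a \<Rightarrow> (nat \<Rightarrow> real) \<Rightarrow> (nat \<Rightarrow> real) \<Rightarrow> (nat \<Rightarrow> real) \<Rightarrow> real^'r)
    \<Rightarrow> (nat \<Rightarrow> 'a \<Rightarrow> 'w \<Rightarrow> real^'r) \<Rightarrow> ('a \<Rightarrow> real^'r^'r)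
    \<Rightarrow> nat \<Rightarrow> 'a \<Rightarrow> (nat \<Rightarrow> real) \<Rightarrow> (nat \<Rightarrow> real) \<Rightarrow> (nat \<Rightarrow> real) \<Rightarrow> 'w \<Rightarrow> real" where
  "RT p sg q1 y mw piinv phs th s I T a b pp vv \<omega> =
     LpiT p sg q1 y mw piinv T a b pp vv \<omega>
     - LpiT p sg q1 y mw piinv T a (bstar sg q1 phs) (phstar sg q1 phs) vzero \<omega>
     - (((1 / sqrt (real T)) *\<^sub>R ST s T a \<omega>) \<bullet> (sqrt (real T) *\<^sub>R th a b pp vv)
        - (1/2) * qform (I a) (sqrt (real T) *\<^sub>R th a b pp vv))"

definition Assumption5 :: "'w measure \<Rightarrow> nat \<Rightarrow> nat \<Rightarrow> nat \<Rightarrow> (nat \<Rightarrow> nat)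
    \<Rightarrow> (int \<Rightarrow> 'w \<Rightarrow> real) \<Rightarrow> (nat \<Rightarrow> real)
    \<Rightarrow> 'a::euclidean_space set \<Rightarrow> (nat \<Rightarrow> real) set \<Rightarrow> (nat \<Rightarrow> real) set
    \<Rightarrow> (int \<Rightarrow> 'a \<Rightarrow> (nat \<Rightarrow> real) \<Rightarrow> (nat \<Rightarrow> real) \<Rightarrow> (nat \<Rightarrow> real) \<Rightarrow> 'w \<Rightarrow> real)
    \<Rightarrow> ('a \<Rightarrow> (nat \<Rightarrow> real) \<times> (nat \<Rightarrow> real) \<Rightarrow> (nat \<Rightarrow> real) \<times> (nat \<Rightarrow> real))
    \<Rightarrow> ('a \<Rightarrow> (nat \<Rightarrow> real) \<times> (nat \<Rightarrow> real) \<Rightarrow> (nat \<Rightarrow> real) \<times> (nat \<Rightarrow> real))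
    \<Rightarrow> ('a \<Rightarrow> (nat \<Rightarrow> real) \<Rightarrow> (nat \<Rightarrow> real) \<Rightarrow> (nat \<Rightarrow> real) \<Rightarrow> real^'r)
    \<Rightarrow> (nat \<Rightarrow> 'a \<Rightarrow> 'w \<Rightarrow> real^'r) \<Rightarrow> 'v measure \<Rightarrow> ('a \<Rightarrow> 'v \<Rightarrow> real^'r)
    \<Rightarrow> ('a \<Rightarrow> real^'r^'r) \<Rightarrow> bool" where
  "Assumption5 M p q1 q2 sg y phs A B Phi mw pimap piinv th s N S I \<longleftrightarrow>
     \<comment> \<open>(i)\<close>
     (\<forall>a\<in>A. th a (bstar sg q1 phs) (phstar sg q1 phs) vzero = 0) \<and>
     (\<forall>e>0. \<exists>d>0. \<forall>a\<in>A. \<forall>b\<in>B. \<forall>x\<in>pimap a ` (Phi \<times> Phi).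
        dist3 q1 q2 b (fst x) (snd x) (bstar sg q1 phs) (phstar sg q1 phs) vzero \<ge> e
        \<longrightarrow> norm (th a b (fst x) (snd x)) \<ge> d) \<and>
     \<comment> \<open>(ii)\<close>
     (\<forall>T. \<forall>a\<in>A. ST s T a \<in> borel_measurable (past_sigma M y (int T))) \<and>
     (\<forall>T. \<forall>\<omega>\<in>space M. continuous_on A (\<lambda>a. ST s T a \<omega>)) \<and>
     weak_conv_unif A M (\<lambda>T a \<omega>. (1 / sqrt (real T)) *\<^sub>R ST s T a \<omega>) N S \<and>
     prob_space N \<and> gaussian_process A N S \<and>
     (AE \<omega> in N. continuous_on A (\<lambda>a. S a \<omega>)) \<and>
     (\<forall>a\<in>A. \<forall>i j. integrable N (\<lambda>\<omega>. S a \<omega> $ i * S a \<omega> $ j) \<and>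
                   (\<integral>\<omega>. S a \<omega> $ i * S a \<omega> $ j \<partial>N) = I a $ i $ j) \<and>
     (\<forall>t\<ge>1. \<forall>a\<in>A. \<forall>i j. integrable M (\<lambda>\<omega>. s t a \<omega> $ i * s t a \<omega> $ j) \<and>
                   (\<integral>\<omega>. s t a \<omega> $ i * s t a \<omega> $ j \<partial>M) = I a $ i $ j) \<and>
     \<comment> \<open>(iii)\<close>
     (\<forall>a\<in>A. transpose (I a) = I a) \<and> continuous_on A I \<and>
     (\<exists>c>0. \<forall>a\<in>A. lam_min (I a) \<ge> c) \<and> (\<exists>C. \<forall>a\<in>A. lam_max (I a) \<le> C) \<and>
     \<comment> \<open>(iv)\<close>
     (\<forall>\<gamma> :: nat \<Rightarrow> real. (\<forall>T. \<gamma> T > 0) \<and> \<gamma> \<longlonglongrightarrow> 0 \<longrightarrow>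
        vanish_p M (\<lambda>T e. {\<omega>. \<exists>a\<in>A. \<exists>b\<in>B. \<exists>x\<in>pimap a ` (Phi \<times> Phi).
            dist3 q1 q2 b (fst x) (snd x) (bstar sg q1 phs) (phstar sg q1 phs) vzero \<le> \<gamma> T \<and>
            \<bar>RT p sg q1 y mw piinv phs th s I T a b (fst x) (snd x) \<omega>\<bar>
              / (1 + norm (sqrt (real T) *\<^sub>R th a b (fst x) (snd x)))\<^sup>2 > e}))"

end

theory Submission
  imports Defs
begin

text \<open>
  Write Z = I^-1 U_T for the normalised score U_T = T^-1/2 S_T and lambda = T^1/2 theta for the
  local parameter. Completing the square turns the quadratic expansion into
  L(z) - L(z*) = Z'IZ/2 - (lambda(z) - Z)'I(lambda(z) - Z)/2 + R(z).
  At the (consistent) approximate maximiser the likelihood ratio is bounded below by -o_p(1), so the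
  negative definite quadratic term forces lambda = O_p(1); at the approximate projection lambda =
  O_p(1) by comparison with lambda(z*) = 0, and the identification condition makes it consistent.
  The remainder condition then gives R = o_p(1) at both estimators, and comparing them in the
  likelihood and in the projection criterion pins the likelihood ratio at the maximiser down to
  Z'IZ/2 - (lambda_q - Z)'I(lambda_q - Z)/2 + o_p(1). The bound U_T = O_p(1) used throughout comes
  from the weak convergence of U_T to a process with continuous paths on the compact set A.
\<close>

section \<open>Quadratic forms\<close>

lemma inner_matrix_sym:
  fixes J :: "real^'r^'r"
  assumes "transpose J = J"
  shows "x \<bullet> (J *v y) = y \<bullet> (J *v x)"
  by (metis assms dot_lmul_matrix inner_commute transpose_matrix_vector)

lemma qform_add:
  fixes J :: "real^'r^'r"
  assumes "transpose J = J"
  shows "qform J (x + y) = qform J x + 2 * (y \<bullet> (J *v x)) + qform J y"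
  using inner_matrix_sym[OF assms, of x y] unfolding qform_def
  by (simp add: matrix_vector_right_distrib inner_add_left inner_add_right)

lemma qform_scaleR: "qform J (t *\<^sub>R x) = t\<^sup>2 * qform J x"
  unfolding qform_def by (simp add: matrix_vector_mult_scaleR power2_eq_square)

lemma qform_minus: "qform J (- x) = qform J x"
  using qform_scaleR[of J "-1" x] by simp

lemma qform_complete_square:
  fixes J :: "real^'r^'r"
  assumes "transpose J = J" and "J *v z = u"
  shows "u \<bullet> l - 1/2 * qform J l = 1/2 * qform J z - 1/2 * qform J (l - z)"
proof -
  have "qform J (l - z) = qform J l - 2 * (l \<bullet> u) + qform J z"
    using qform_add[OF assms(1), of l "- z"] inner_matrix_sym[OF assms(1), of z l] assms(2)
    by (simp add: qform_minus)
  then show ?thesis by (simp add: inner_commute algebra_simps)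
qed

text \<open>Otherwise v - t J v would make the form negative for small t > 0.\<close>
lemma psd_qform_zero_imp_kernel:
  fixes J :: "real^'r^'r"
  assumes sym: "transpose J = J" and psd: "\<And>v. 0 \<le> qform J v" and zero: "qform J v = 0"
  shows "J *v v = 0"
proof -
  define w where "w = J *v v"
  define b where "b = qform J w"
  have b: "0 \<le> b" using psd by (simp add: b_def)
  have expand: "qform J (v - t *\<^sub>R w) = t\<^sup>2 * b - 2 * t * (w \<bullet> w)" for t
    using qform_add[OF sym, of v "- (t *\<^sub>R w)"] zero
    by (simp add: qform_minus qform_scaleR b_def w_def)
  define W where "W = w \<bullet> w"
  define t where "t = W / (b + 1)"
  have "0 \<le> t\<^sup>2 * b - 2 * t * W" using psd expand unfolding W_def by metis
  also have "\<dots> = - (W\<^sup>2 * (b + 2)) / (b + 1)\<^sup>2"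
    using b by (simp add: t_def power2_eq_square divide_simps) (simp add: algebra_simps)
  finally have "W\<^sup>2 * (b + 2) \<le> 0" using b by (simp add: divide_le_0_iff)
  then have "W\<^sup>2 \<le> 0" using b by (simp add: mult_le_0_iff)
  then have "W = 0" by simp
  then show ?thesis by (simp add: W_def w_def)
qed

lemma eigvals_bdd_below:
  fixes J :: "real^'r^'r"
  shows "bdd_below (eigvals J)"
proof -
  obtain K where K: "\<And>x. norm (J *v x) \<le> K * norm x"
    by (metis matrix_vector_mul_bounded_linear onorm)
  have "- K \<le> e" if "v \<noteq> 0" "J *v v = e *\<^sub>R v" for e v
    using K[of v] that by simp
  then show ?thesis unfolding bdd_below_def eigvals_def by blast
qed

text \<open>The minimum m of the form on the unit sphere is an eigenvalue, since J - m is positive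
  semidefinite and vanishes at the minimiser.\<close>
lemma qform_ge_lam_min:
  fixes J :: "real^'r^'r"
  assumes sym: "transpose J = J" and lam: "c \<le> lam_min J"
  shows "c * (norm v)\<^sup>2 \<le> qform J v"
proof -
  have "compact (sphere (0 :: real^'r) 1)" "sphere (0 :: real^'r) 1 \<noteq> {}" by auto
  moreover have "continuous_on (sphere 0 1) (qform J)"
    unfolding qform_def
    by (intro continuous_intros linear_continuous_on matrix_vector_mul_bounded_linear)
  ultimately obtain v0 where v0: "norm v0 = 1" and min: "\<And>u. norm u = 1 \<Longrightarrow> qform J v0 \<le> qform J u"
    using continuous_attains_inf by (metis mem_sphere_0)
  define m where "m = qform J v0"
  have m_le: "m * (norm u)\<^sup>2 \<le> qform J u" for u
  proof (cases "u = 0")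
    case False
    have "m \<le> qform J ((1 / norm u) *\<^sub>R u)" using min False by (simp add: m_def)
    then show ?thesis using False by (simp add: qform_scaleR power_divide field_simps)
  qed (simp add: qform_def)
  define J' where "J' = J - m *\<^sub>R mat 1"
  have J'v: "J' *v u = J *v u - m *\<^sub>R u" for u
    by (simp only: J'_def matrix_vector_mult_diff_rdistrib scaleR_matrix_vector_assoc[symmetric]
        matrix_vector_mul_lid)
  have qJ': "qform J' u = qform J u - m * (norm u)\<^sup>2" for u
    by (simp add: qform_def J'v inner_diff_right power2_norm_eq_inner)
  have "transpose J' = J'" using sym by (simp add: J'_def transpose_def vec_eq_iff mat_def)
  then have "J' *v v0 = 0"
    by (rule psd_qform_zero_imp_kernel) (use qJ' m_le v0 m_def in auto)
  then have "m \<in> eigvals J" using v0 unfolding eigvals_def by (auto simp: J'v intro!: exI[of _ v0])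
  then have "c \<le> m" using lam cInf_lower[OF _ eigvals_bdd_below] unfolding lam_min_def by fastforce
  then show ?thesis using m_le[of v] by (meson mult_right_mono order_trans zero_le_power2)
qed

lemma matrix_inv_mult_cancel:
  fixes J :: "real^'r^'r"
  assumes c: "0 < c" and pd: "\<And>v. c * (norm v)\<^sup>2 \<le> qform J v"
  shows "J *v (matrix_inv J *v u) = u"
proof -
  have "x = 0" if "J *v x = 0" for x
    using pd[of x] that c by (simp add: qform_def mult_le_0_iff)
  then have "invertible J"
    using matrix_left_invertible_ker invertible_left_inverse by blast
  then have "J ** matrix_inv J = mat 1"
    unfolding invertible_def matrix_inv_def
    by (rule someI_ex[where P="\<lambda>J'. J ** J' = mat 1 \<and> J' ** J = mat 1", THEN conjunct1])
  then show ?thesis by (simp add: matrix_vector_mul_assoc)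
qed

section \<open>Events of vanishing outer probability\<close>

definition ev_outer_prob_less :: "'w measure \<Rightarrow> real \<Rightarrow> (nat \<Rightarrow> 'w set) \<Rightarrow> bool" where
  "ev_outer_prob_less M d P \<longleftrightarrow>
     eventually (\<lambda>T. \<exists>F\<in>sets M. measure M F < d \<and> P T \<inter> space M \<subseteq> F) sequentially"

definition vanishing :: "'w measure \<Rightarrow> (nat \<Rightarrow> 'w set) \<Rightarrow> bool" where
  "vanishing M P \<longleftrightarrow> (\<forall>d>0. ev_outer_prob_less M d P)"

text \<open>Uniform boundedness in probability, the O_{p alpha}(1) of the paper, for nonnegative X.\<close>
definition bdd_in_prob :: "'w measure \<Rightarrow> 'a set \<Rightarrow> (nat \<Rightarrow> 'a \<Rightarrow> 'w \<Rightarrow> real) \<Rightarrow> bool" where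
  "bdd_in_prob M A X \<longleftrightarrow> (\<forall>d>0. \<exists>K. ev_outer_prob_less M d (\<lambda>T. {\<omega>. \<exists>a\<in>A. K < X T a \<omega>}))"

lemma ev_outer_prob_less_mono:
  assumes "ev_outer_prob_less M d Q" "d \<le> d'"
    and "eventually (\<lambda>T. \<forall>\<omega>\<in>space M. \<omega> \<in> P T \<longrightarrow> \<omega> \<in> Q T) sequentially"
  shows "ev_outer_prob_less M d' P"
  using assms(3,1) unfolding ev_outer_prob_less_def
proof (eventually_elim)
  case (elim T)
  then obtain F where "F \<in> sets M" "measure M F < d" "Q T \<inter> space M \<subseteq> F" by blast
  with elim(1) assms(2) show ?case by (intro bexI[of _ F]) auto
qed

lemma ev_outer_prob_less_Un:
  assumes "ev_outer_prob_less M d1 P" "ev_outer_prob_less M d2 Q"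
  shows "ev_outer_prob_less M (d1 + d2) (\<lambda>T. P T \<union> Q T)"
  using assms unfolding ev_outer_prob_less_def
proof (eventually_elim)
  case (elim T)
  then obtain F1 F2 where F: "F1 \<in> sets M" "measure M F1 < d1" "P T \<inter> space M \<subseteq> F1"
    "F2 \<in> sets M" "measure M F2 < d2" "Q T \<inter> space M \<subseteq> F2" by blast
  then have "measure M (F1 \<union> F2) < d1 + d2"
    using measure_Un_le[of F1 M F2] by linarith
  with F show ?case by (intro bexI[of _ "F1 \<union> F2"]) auto
qed

lemma vanishing_Un:
  assumes "vanishing M P" "vanishing M Q"
  shows "vanishing M (\<lambda>T. P T \<union> Q T)"
  unfolding vanishing_def
proof (intro allI impI)
  fix d :: real assume "0 < d"
  then have "ev_outer_prob_less M (d/2 + d/2) (\<lambda>T. P T \<union> Q T)"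
    using assms by (intro ev_outer_prob_less_Un) (auto simp: vanishing_def)
  then show "ev_outer_prob_less M d (\<lambda>T. P T \<union> Q T)" by simp
qed

lemma vanishing_mono:
  assumes "vanishing M Q" "eventually (\<lambda>T. \<forall>\<omega>\<in>space M. \<omega> \<in> P T \<longrightarrow> \<omega> \<in> Q T) sequentially"
  shows "vanishing M P"
  using assms ev_outer_prob_less_mono unfolding vanishing_def by blast

lemma vanish_p_iff_vanishing: "vanish_p M E \<longleftrightarrow> (\<forall>e>0. vanishing M (\<lambda>T. E T e))"
  unfolding vanish_p_def vanishing_def ev_outer_prob_less_def by blast

lemma op_unif_iff_vanishing:
  "op_unif M A X \<longleftrightarrow> (\<forall>e>0. vanishing M (\<lambda>T. {\<omega>. \<exists>a\<in>A. e < \<bar>X T a \<omega>\<bar>}))"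
  unfolding op_unif_def vanish_p_iff_vanishing by simp

lemma op_unif_abs: "op_unif M A X \<Longrightarrow> op_unif M A (\<lambda>T a \<omega>. \<bar>X T a \<omega>\<bar>)"
  unfolding op_unif_def by simp

lemma op_unif_add:
  assumes "op_unif M A X" "op_unif M A Y"
  shows "op_unif M A (\<lambda>T a \<omega>. X T a \<omega> + Y T a \<omega>)"
  unfolding op_unif_iff_vanishing
proof (intro allI impI)
  fix e :: real assume "0 < e"
  then have "0 < e/2" by simp
  then have "vanishing M (\<lambda>T. {\<omega>. \<exists>a\<in>A. e/2 < \<bar>X T a \<omega>\<bar>} \<union> {\<omega>. \<exists>a\<in>A. e/2 < \<bar>Y T a \<omega>\<bar>})"
    using assms unfolding op_unif_iff_vanishing by (simp only: vanishing_Un)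
  then show "vanishing M (\<lambda>T. {\<omega>. \<exists>a\<in>A. e < \<bar>X T a \<omega> + Y T a \<omega>\<bar>})"
  proof (rule vanishing_mono, intro always_eventually allI ballI impI)
    fix T \<omega> assume "\<omega> \<in> {\<omega>. \<exists>a\<in>A. e < \<bar>X T a \<omega> + Y T a \<omega>\<bar>}"
    then obtain a where "a \<in> A" "e < \<bar>X T a \<omega> + Y T a \<omega>\<bar>" by blast
    moreover have "\<bar>X T a \<omega> + Y T a \<omega>\<bar> \<le> \<bar>X T a \<omega>\<bar> + \<bar>Y T a \<omega>\<bar>" by (rule abs_triangle_ineq)
    ultimately have "e/2 < \<bar>X T a \<omega>\<bar> \<or> e/2 < \<bar>Y T a \<omega>\<bar>" by linarith
    with \<open>a \<in> A\<close> show "\<omega> \<in> {\<omega>. \<exists>a\<in>A. e/2 < \<bar>X T a \<omega>\<bar>} \<union> {\<omega>. \<exists>a\<in>A. e/2 < \<bar>Y T a \<omega>\<bar>}"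
      by blast
  qed
qed

lemma op_unif_abs_le:
  assumes "op_unif M A X" and "\<And>T a \<omega>. a \<in> A \<Longrightarrow> \<omega> \<in> space M \<Longrightarrow> \<bar>Y T a \<omega>\<bar> \<le> X T a \<omega>"
  shows "op_unif M A Y"
  unfolding op_unif_iff_vanishing
proof (intro allI impI)
  fix e :: real assume "0 < e"
  then have "vanishing M (\<lambda>T. {\<omega>. \<exists>a\<in>A. e < \<bar>X T a \<omega>\<bar>})"
    using assms(1) unfolding op_unif_iff_vanishing by blast
  then show "vanishing M (\<lambda>T. {\<omega>. \<exists>a\<in>A. e < \<bar>Y T a \<omega>\<bar>})"
  proof (rule vanishing_mono, intro always_eventually allI ballI impI)
    fix T \<omega> assume \<omega>: "\<omega> \<in> space M" "\<omega> \<in> {\<omega>. \<exists>a\<in>A. e < \<bar>Y T a \<omega>\<bar>}"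
    then obtain a where "a \<in> A" "e < \<bar>Y T a \<omega>\<bar>" by blast
    with assms(2)[of a \<omega> T] \<omega>(1) show "\<omega> \<in> {\<omega>. \<exists>a\<in>A. e < \<bar>X T a \<omega>\<bar>}" by force
  qed
qed

lemma sequentially_diagonal:
  assumes "\<And>k. eventually (Q k) sequentially"
  obtains K :: "nat \<Rightarrow> nat"
  where "filterlim K at_top sequentially" "eventually (\<lambda>T. Q (K T) T) sequentially"
proof -
  obtain N where N: "\<And>k T. N k \<le> T \<Longrightarrow> Q k T"
    using assms unfolding eventually_sequentially by metis
  define good where "good T = {k. k \<le> T \<and> (\<forall>j\<le>k. N j \<le> T)}" for T
  define K where "K T = Max (good T)" for T
  have good_m: "eventually (\<lambda>T. m \<in> good T) sequentially" for m
    unfolding eventually_sequentially good_def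
    by (rule exI[of _ "max m (Max (N ` {..m}))"]) auto
  have fin: "finite (good T)" for T
    by (rule finite_subset[of _ "{..T}"]) (auto simp: good_def)
  have K_ge: "eventually (\<lambda>T. m \<le> K T \<and> K T \<in> good T) sequentially" for m
    using good_m[of m]
  proof eventually_elim
    case (elim T)
    with fin[of T] show ?case by (auto simp: K_def intro: Max_in)
  qed
  show thesis
  proof
    show "filterlim K at_top sequentially"
      unfolding filterlim_at_top using K_ge by (blast intro: eventually_mono)
    show "eventually (\<lambda>T. Q (K T) T) sequentially"
      using K_ge[of 0] by eventually_elim (auto simp: good_def intro: N)
  qed
qed

lemma vanishing_diagonal:
  assumes "\<forall>e>0. vanishing M (\<lambda>T. E T e)"
  obtains \<gamma> :: "nat \<Rightarrow> real"
  where "\<forall>T. 0 < \<gamma> T" "\<gamma> \<longlonglongrightarrow> 0" "vanishing M (\<lambda>T. E T (\<gamma> T))"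
proof -
  define r :: "nat \<Rightarrow> real" where "r k = 1 / (real k + 1)" for k
  have "eventually (\<lambda>T. \<exists>F\<in>sets M. measure M F < r k \<and> E T (r k) \<inter> space M \<subseteq> F) sequentially" for k
    using assms unfolding vanishing_def ev_outer_prob_less_def by (simp add: r_def)
  then obtain K where K: "filterlim K at_top sequentially"
    and QK: "eventually (\<lambda>T. \<exists>F\<in>sets M. measure M F < r (K T) \<and> E T (r (K T)) \<inter> space M \<subseteq> F)
      sequentially"
    by (rule sequentially_diagonal)
  have r0: "r \<longlonglongrightarrow> 0"
    unfolding r_def using LIMSEQ_ignore_initial_segment[OF lim_inverse_n', of 1]
    by (simp add: add.commute inverse_eq_divide)
  have "(\<lambda>T. r (K T)) \<longlonglongrightarrow> 0" using filterlim_compose[OF r0 K] .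
  moreover have "vanishing M (\<lambda>T. E T (r (K T)))"
    unfolding vanishing_def ev_outer_prob_less_def
  proof (intro allI impI)
    fix d :: real assume "0 < d"
    then have "eventually (\<lambda>T. r (K T) < d) sequentially"
      using \<open>(\<lambda>T. r (K T)) \<longlonglongrightarrow> 0\<close> by (rule order_tendstoD(2)[rotated])
    with QK show "eventually (\<lambda>T. \<exists>F\<in>sets M. measure M F < d \<and> E T (r (K T)) \<inter> space M \<subseteq> F)
      sequentially"
      by eventually_elim (blast intro: less_trans)
  qed
  ultimately show thesis by (intro that[of "\<lambda>T. r (K T)"]) (auto simp: r_def)
qed

section \<open>Tightness from weak convergence\<close>

lemma cSUP_closure_eq:
  fixes g :: "'a::metric_space \<Rightarrow> real"
  assumes "D \<subseteq> A" "A \<subseteq> closure D" "closed A" "A \<noteq> {}"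
    and "continuous_on A g" and "\<And>a. a \<in> A \<Longrightarrow> g a \<le> B"
  shows "(SUP a\<in>A. g a) = (SUP a\<in>D. g a)"
proof -
  have D: "closure D = A" using assms(1-3) by (metis closure_minimal subset_antisym)
  then have "D \<noteq> {}" using assms(4) by auto
  have bD: "bdd_above (g ` D)" using assms(1,6) by (intro bdd_aboveI2) auto
  then have "g ` D \<subseteq> {..(SUP a\<in>D. g a)}" by (auto intro: cSUP_upper)
  then have "g ` closure D \<subseteq> {..(SUP a\<in>D. g a)}"
    by (intro image_closure_subset) (use assms(5) D in auto)
  then have "(SUP a\<in>A. g a) \<le> (SUP a\<in>D. g a)" using D assms(4) by (auto intro!: cSUP_least)
  moreover have "(SUP a\<in>D. g a) \<le> (SUP a\<in>A. g a)"
    using assms(1,6) \<open>D \<noteq> {}\<close> by (intro cSUP_subset_mono bdd_aboveI2) auto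
  ultimately show ?thesis by simp
qed

definition trunc_norm :: "real \<Rightarrow> ('a \<Rightarrow> 'b::real_normed_vector) \<Rightarrow> 'a \<Rightarrow> real" where
  "trunc_norm K f a = min (K + 1) (norm (f a))"

text \<open>A Lipschitz functional of the sample path with values in [0, 1], vanishing when the sup-norm
  is at most K and equal to 1 when it exceeds K + 1: weak convergence applies to it, and it dominates
  the indicator of a large sup-norm.\<close>
definition sup_excess :: "'a set \<Rightarrow> real \<Rightarrow> ('a \<Rightarrow> 'b::real_normed_vector) \<Rightarrow> real" where
  "sup_excess A K f = min 1 (max 0 ((SUP a\<in>A. trunc_norm K f a) - K))"

lemma bdd_above_trunc_norm: "bdd_above (trunc_norm K f ` A)"
  by (rule bdd_aboveI2[of _ _ "K + 1"]) (simp add: trunc_norm_def)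

lemma sup_excess_bounds: "0 \<le> sup_excess A K f" "sup_excess A K f \<le> 1"
  by (auto simp: sup_excess_def)

lemma sup_excess_cong: "(\<And>a. a \<in> A \<Longrightarrow> f a = g a) \<Longrightarrow> sup_excess A K f = sup_excess A K g"
  unfolding sup_excess_def trunc_norm_def by (auto intro!: arg_cong[where f=Sup] image_cong)

lemma sup_excess_dist:
  assumes "A \<noteq> {}" and "\<And>a. a \<in> A \<Longrightarrow> norm (f a - g a) \<le> e"
  shows "\<bar>sup_excess A K f - sup_excess A K g\<bar> \<le> e"
proof -
  have pt: "trunc_norm K f a \<le> trunc_norm K g a + e" "trunc_norm K g a \<le> trunc_norm K f a + e"
    if "a \<in> A" for a
  proof -
    have "\<bar>norm (f a) - norm (g a)\<bar> \<le> e"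
      using norm_triangle_ineq3[of "f a" "g a"] assms(2)[OF that] by linarith
    then show "trunc_norm K f a \<le> trunc_norm K g a + e" "trunc_norm K g a \<le> trunc_norm K f a + e"
      unfolding trunc_norm_def by linarith+
  qed
  have "(SUP a\<in>A. trunc_norm K f a) \<le> (SUP a\<in>A. trunc_norm K g a) + e"
  proof (rule cSUP_least[OF assms(1)])
    fix a assume "a \<in> A"
    with pt(1)[OF this] cSUP_upper[OF this bdd_above_trunc_norm, of K g]
    show "trunc_norm K f a \<le> (SUP a\<in>A. trunc_norm K g a) + e" by linarith
  qed
  moreover have "(SUP a\<in>A. trunc_norm K g a) \<le> (SUP a\<in>A. trunc_norm K f a) + e"
  proof (rule cSUP_least[OF assms(1)])
    fix a assume "a \<in> A"
    with pt(2)[OF this] cSUP_upper[OF this bdd_above_trunc_norm, of K f]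
    show "trunc_norm K g a \<le> (SUP a\<in>A. trunc_norm K f a) + e" by linarith
  qed
  ultimately show ?thesis unfolding sup_excess_def by linarith
qed

lemma sup_excess_eq_1:
  assumes "a \<in> A" "K + 1 < norm (f a)"
  shows "sup_excess A K f = 1"
proof -
  have "trunc_norm K f a = K + 1" using assms(2) by (simp add: trunc_norm_def)
  then have "K + 1 \<le> (SUP a\<in>A. trunc_norm K f a)"
    using cSUP_upper[OF assms(1) bdd_above_trunc_norm, of K f] by simp
  then show ?thesis unfolding sup_excess_def by simp
qed

lemma sup_excess_eq_0:
  assumes "A \<noteq> {}" "\<And>a. a \<in> A \<Longrightarrow> norm (f a) \<le> K"
  shows "sup_excess A K f = 0"
proof -
  have "(SUP a\<in>A. trunc_norm K f a) \<le> K"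
    using assms by (intro cSUP_least) (auto simp: trunc_norm_def min_le_iff_disj)
  then show ?thesis unfolding sup_excess_def by simp
qed

lemma sup_excess_closure_eq:
  fixes f :: "'a::metric_space \<Rightarrow> 'b::real_normed_vector"
  assumes "D \<subseteq> A" "A \<subseteq> closure D" "closed A" "continuous_on A f"
  shows "sup_excess A K f = sup_excess D K f"
proof (cases "A = {}")
  case False
  have "continuous_on A (trunc_norm K f)"
    unfolding trunc_norm_def by (intro continuous_intros assms(4))
  then show ?thesis
    unfolding sup_excess_def
    using cSUP_closure_eq[OF assms(1-3) False, of "trunc_norm K f" "K + 1"]
    by (simp add: trunc_norm_def)
qed (use assms(1) in simp)

lemma sup_excess_measurable:
  assumes "countable D" "\<And>a. a \<in> D \<Longrightarrow> (\<lambda>\<omega>. norm (X a \<omega>)) \<in> borel_measurable M"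
  shows "(\<lambda>\<omega>. sup_excess D K (\<lambda>a. X a \<omega>)) \<in> borel_measurable M"
proof -
  have "(\<lambda>\<omega>. SUP a\<in>D. min (K + 1) (norm (X a \<omega>))) \<in> borel_measurable M"
    using assms by (intro borel_measurable_cSUP borel_measurable_min borel_measurable_const)
      (auto intro: bdd_aboveI2[where M="K + 1"])
  then show ?thesis unfolding sup_excess_def trunc_norm_def by measurable
qed

lemma weak_conv_unif_sup_excess:
  fixes X :: "nat \<Rightarrow> 'a \<Rightarrow> 'w \<Rightarrow> 'b::real_normed_vector"
  assumes "weak_conv_unif A M X N S" "A \<noteq> {}"
  shows "(\<lambda>T. \<integral>\<omega>. sup_excess A K (\<lambda>a. X T a \<omega>) \<partial>M) \<longlonglongrightarrow> (\<integral>\<omega>. sup_excess A K (\<lambda>a. S a \<omega>) \<partial>N)"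
proof (rule assms(1)[unfolded weak_conv_unif_def, THEN spec[of _ "sup_excess A K"], THEN mp],
    intro conjI allI impI)
  show "\<exists>B. \<forall>f. \<bar>sup_excess A K f\<bar> \<le> B"
    by (intro exI[of _ 1] allI) (metis sup_excess_bounds abs_of_nonneg)
  show "sup_excess A K f = sup_excess A K g" if "\<forall>a\<in>A. f a = g a" for f g :: "'a \<Rightarrow> 'b"
    using that by (intro sup_excess_cong) blast
  fix f :: "'a \<Rightarrow> 'b" and e :: real assume "0 < e"
  show "\<exists>d>0. \<forall>g. (\<exists>B. \<forall>a\<in>A. norm (g a) \<le> B) \<longrightarrow>
    (\<forall>a\<in>A. norm (f a - g a) < d) \<longrightarrow> \<bar>sup_excess A K f - sup_excess A K g\<bar> < e"
  proof (intro exI[of _ "e/2"] conjI allI impI)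
    fix g assume "\<forall>a\<in>A. norm (f a - g a) < e/2"
    then have "\<bar>sup_excess A K f - sup_excess A K g\<bar> \<le> e/2"
      by (intro sup_excess_dist[OF assms(2)]) auto
    then show "\<bar>sup_excess A K f - sup_excess A K g\<bar> < e" using \<open>0 < e\<close> by linarith
  qed (use \<open>0 < e\<close> in simp)
qed

lemma sup_excess_path_measurable:
  fixes X :: "'a::euclidean_space \<Rightarrow> 'w \<Rightarrow> 'b::real_normed_vector"
  assumes "closed A" "\<And>a. a \<in> A \<Longrightarrow> (\<lambda>\<omega>. norm (X a \<omega>)) \<in> borel_measurable M"
  obtains \<psi> where "\<psi> \<in> borel_measurable M"
    "\<And>\<omega>. continuous_on A (\<lambda>a. X a \<omega>) \<Longrightarrow> sup_excess A K (\<lambda>a. X a \<omega>) = \<psi> \<omega>"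
proof -
  obtain D where D: "countable D" "D \<subseteq> A" "A \<subseteq> closure D" using separable by blast
  show thesis
  proof (rule that[of "\<lambda>\<omega>. sup_excess D K (\<lambda>a. X a \<omega>)"])
    show "(\<lambda>\<omega>. sup_excess D K (\<lambda>a. X a \<omega>)) \<in> borel_measurable M"
      using D assms(2) by (intro sup_excess_measurable) auto
  qed (use D assms(1) sup_excess_closure_eq in blast)
qed

lemma integral_sup_excess_small:
  fixes S :: "'a::euclidean_space \<Rightarrow> 'v \<Rightarrow> 'b::real_normed_vector"
  assumes N: "prob_space N" and A: "compact A" "A \<noteq> {}"
    and meas: "\<And>a. a \<in> A \<Longrightarrow> (\<lambda>\<omega>. norm (S a \<omega>)) \<in> borel_measurable N"
    and cont: "AE \<omega> in N. continuous_on A (\<lambda>a. S a \<omega>)" and "0 < d"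
  obtains K :: nat where "(\<integral>\<omega>. sup_excess A (real K) (\<lambda>a. S a \<omega>) \<partial>N) < d"
proof -
  interpret N: prob_space N by (rule N)
  obtain D where D: "countable D" "D \<subseteq> A" "A \<subseteq> closure D" using separable by blast
  then have "D \<noteq> {}" using A(2) by auto
  define \<psi> where "\<psi> K \<omega> = sup_excess D (real K) (\<lambda>a. S a \<omega>)" for K \<omega>
  have \<psi>_meas: "\<psi> K \<in> borel_measurable N" for K
    unfolding \<psi>_def using D meas by (intro sup_excess_measurable) auto
  have "(\<lambda>K. \<integral>\<omega>. \<psi> K \<omega> \<partial>N) \<longlonglongrightarrow> (\<integral>\<omega>. 0 \<partial>N)"
  proof (rule integral_dominated_convergence[where w="\<lambda>_. 1"])
    show "AE \<omega> in N. (\<lambda>K. \<psi> K \<omega>) \<longlonglongrightarrow> 0"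
      using cont
    proof eventually_elim
      fix \<omega> assume "continuous_on A (\<lambda>a. S a \<omega>)"
      then have "bounded ((\<lambda>a. S a \<omega>) ` A)"
        using A(1) by (intro compact_imp_bounded compact_continuous_image)
      then obtain B where "\<And>a. a \<in> A \<Longrightarrow> norm (S a \<omega>) \<le> B" unfolding bounded_iff by blast
      then have "\<psi> K \<omega> = 0" if "B \<le> real K" for K
        unfolding \<psi>_def using D(2) that \<open>D \<noteq> {}\<close> by (intro sup_excess_eq_0) force+
      moreover obtain K0 :: nat where "B \<le> real K0" using real_arch_simple by blast
      ultimately have "eventually (\<lambda>K. \<psi> K \<omega> = 0) sequentially"
        unfolding eventually_sequentially by (intro exI[of _ K0]) force
      then show "(\<lambda>K. \<psi> K \<omega>) \<longlonglongrightarrow> 0" by (rule tendsto_eventually)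
    qed
  qed (use \<psi>_meas[unfolded \<psi>_def] in \<open>auto simp: sup_excess_bounds \<psi>_def abs_of_nonneg\<close>)
  then have "eventually (\<lambda>K. (\<integral>\<omega>. \<psi> K \<omega> \<partial>N) < d) sequentially"
    using \<open>0 < d\<close> by (intro order_tendstoD(2)) auto
  then obtain K where K: "(\<integral>\<omega>. \<psi> K \<omega> \<partial>N) < d"
    by (meson eventually_sequentially order_refl)
  have "(\<integral>\<omega>. sup_excess A (real K) (\<lambda>a. S a \<omega>) \<partial>N) \<le> (\<integral>\<omega>. \<psi> K \<omega> \<partial>N)"
  proof (cases "integrable N (\<lambda>\<omega>. sup_excess A (real K) (\<lambda>a. S a \<omega>))")
    case True
    have "AE \<omega> in N. sup_excess A (real K) (\<lambda>a. S a \<omega>) = \<psi> K \<omega>"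
      using cont
      by eventually_elim (use D A in \<open>simp add: \<psi>_def sup_excess_closure_eq compact_imp_closed\<close>)
    then show ?thesis using integral_cong_AE[OF borel_measurable_integrable[OF True] \<psi>_meas] by simp
  qed (simp add: not_integrable_integral_eq \<psi>_def sup_excess_bounds)
  with K show thesis by (intro that[of K]) simp
qed

lemma measure_sup_norm_gt_le_integral:
  fixes X :: "'a::euclidean_space \<Rightarrow> 'w \<Rightarrow> 'b::real_normed_vector"
  assumes M: "prob_space M" and "closed A"
    and "\<And>a. a \<in> A \<Longrightarrow> (\<lambda>\<omega>. norm (X a \<omega>)) \<in> borel_measurable M"
    and cont: "\<And>\<omega>. \<omega> \<in> space M \<Longrightarrow> continuous_on A (\<lambda>a. X a \<omega>)"
  obtains F where "F \<in> sets M" "measure M F \<le> (\<integral>\<omega>. sup_excess A K (\<lambda>a. X a \<omega>) \<partial>M)"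
    "{\<omega>. \<exists>a\<in>A. K + 1 < norm (X a \<omega>)} \<inter> space M \<subseteq> F"
proof -
  interpret M: prob_space M by (rule M)
  define \<phi> where "\<phi> \<omega> = sup_excess A K (\<lambda>a. X a \<omega>)" for \<omega>
  obtain \<psi> where \<psi>: "\<psi> \<in> borel_measurable M"
    "\<And>\<omega>. continuous_on A (\<lambda>a. X a \<omega>) \<Longrightarrow> sup_excess A K (\<lambda>a. X a \<omega>) = \<psi> \<omega>"
    using sup_excess_path_measurable[of A X M K, OF assms(2,3)] by blast
  have "\<phi> \<omega> = \<psi> \<omega>" if "\<omega> \<in> space M" for \<omega>
    unfolding \<phi>_def using \<psi>(2) cont that by blast
  then have \<phi>_meas: "\<phi> \<in> borel_measurable M"
    using measurable_cong[of M \<phi> \<psi>] \<psi>(1) by blast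
  have \<phi>01: "0 \<le> \<phi> \<omega>" "\<phi> \<omega> \<le> 1" for \<omega>
    unfolding \<phi>_def by (rule sup_excess_bounds)+
  have \<phi>_int: "integrable M \<phi>"
    using \<phi>_meas \<phi>01 by (intro M.integrable_const_bound[where B=1]) auto
  define F where "F = {\<omega> \<in> space M. 1 \<le> \<phi> \<omega>}"
  have F: "F \<in> sets M" unfolding F_def using \<phi>_meas by measurable
  have F_int: "integrable M (\<lambda>\<omega>. indicator F \<omega> :: real)"
    using F by (intro M.integrable_const_bound[where B=1]) (auto simp: indicator_def)
  have "measure M F = (\<integral>\<omega>. indicator F \<omega> \<partial>M)" using F by simp
  also have "\<dots> \<le> (\<integral>\<omega>. \<phi> \<omega> \<partial>M)"
    using F_int \<phi>_int \<phi>01 by (intro integral_mono) (auto simp: F_def indicator_def)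
  finally have "measure M F \<le> (\<integral>\<omega>. sup_excess A K (\<lambda>a. X a \<omega>) \<partial>M)"
    unfolding \<phi>_def .
  then show thesis
    by (rule that[OF F]) (auto simp: F_def \<phi>_def sup_excess_eq_1)
qed

lemma weak_conv_unif_bdd_in_prob:
  fixes X :: "nat \<Rightarrow> 'a::euclidean_space \<Rightarrow> 'w \<Rightarrow> 'b::real_normed_vector"
  assumes M: "prob_space M" and N: "prob_space N" and A: "compact A"
    and X_meas: "\<And>T a. a \<in> A \<Longrightarrow> (\<lambda>\<omega>. norm (X T a \<omega>)) \<in> borel_measurable M"
    and X_cont: "\<And>T \<omega>. \<omega> \<in> space M \<Longrightarrow> continuous_on A (\<lambda>a. X T a \<omega>)"
    and conv: "weak_conv_unif A M X N S"
    and S_meas: "\<And>a. a \<in> A \<Longrightarrow> (\<lambda>\<omega>. norm (S a \<omega>)) \<in> borel_measurable N"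
    and S_cont: "AE \<omega> in N. continuous_on A (\<lambda>a. S a \<omega>)"
  shows "bdd_in_prob M A (\<lambda>T a \<omega>. norm (X T a \<omega>))"
  unfolding bdd_in_prob_def
proof (intro allI impI)
  fix d :: real assume "0 < d"
  show "\<exists>K. ev_outer_prob_less M d (\<lambda>T. {\<omega>. \<exists>a\<in>A. K < norm (X T a \<omega>)})"
  proof (cases "A = {}")
    case False
    obtain K :: nat where "(\<integral>\<omega>. sup_excess A (real K) (\<lambda>a. S a \<omega>) \<partial>N) < d"
      using integral_sup_excess_small[OF N A False S_meas S_cont \<open>0 < d\<close>] .
    then have "eventually (\<lambda>T. (\<integral>\<omega>. sup_excess A (real K) (\<lambda>a. X T a \<omega>) \<partial>M) < d) sequentially"
      using weak_conv_unif_sup_excess[OF conv False] by (rule order_tendstoD(2)[rotated])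
    then have "ev_outer_prob_less M d (\<lambda>T. {\<omega>. \<exists>a\<in>A. real K + 1 < norm (X T a \<omega>)})"
      unfolding ev_outer_prob_less_def
    proof eventually_elim
      case (elim T)
      obtain F where "F \<in> sets M" "measure M F \<le> (\<integral>\<omega>. sup_excess A (real K) (\<lambda>a. X T a \<omega>) \<partial>M)"
        "{\<omega>. \<exists>a\<in>A. real K + 1 < norm (X T a \<omega>)} \<inter> space M \<subseteq> F"
        using measure_sup_norm_gt_le_integral[of M A "X T" "real K",
            OF M compact_imp_closed[OF A] X_meas X_cont]
        by blast
      with elim show ?case by (intro bexI[of _ F]) auto
    qed
    then show ?thesis by blast
  qed (use \<open>0 < d\<close> in \<open>auto simp: ev_outer_prob_less_def intro!: bexI[of _ "{}"]\<close>)
qed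

section \<open>The expansion at the estimators\<close>

lemma norm_le_of_quadratic_expansion:
  fixes u l :: "real^'r" and J :: "real^'r^'r"
  assumes c: "0 < c" and pd: "c * (norm l)\<^sup>2 \<le> qform J l" and u: "norm u \<le> K0"
    and lower: "- 1 \<le> u \<bullet> l - 1/2 * qform J l + R" and R: "\<bar>R\<bar> \<le> c/8 * (1 + norm l)\<^sup>2"
  shows "norm l \<le> 4 * K0 / c + 4 / c + 1"
proof -
  define x where "x = norm l"
  have "0 \<le> K0" using u norm_ge_zero order_trans by blast
  have ul: "u \<bullet> l \<le> K0 * x"
    using norm_cauchy_schwarz[of u l] mult_right_mono[OF u norm_ge_zero[of l]] unfolding x_def
    by linarith
  have "(1 + x)\<^sup>2 \<le> 2 + 2 * x\<^sup>2"
    using zero_le_power2[of "x - 1"] by (simp add: power2_eq_square algebra_simps)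
  then have "c/8 * (1 + x)\<^sup>2 \<le> c/4 + c/4 * x\<^sup>2"
    using c mult_left_mono[of "(1 + x)\<^sup>2" "2 + 2 * x\<^sup>2" "c/8"] by (simp add: algebra_simps)
  then have "c/4 * x\<^sup>2 \<le> K0 * x + c/4 + 1"
    using ul lower R pd unfolding x_def[symmetric] by linarith
  moreover have "c * ((4 * K0 / c) * x + (4 / c + 1)) = 4 * (K0 * x + c/4 + 1)"
    using c by (simp add: field_simps)
  ultimately have "c * x\<^sup>2 \<le> c * ((4 * K0 / c) * x + (4 / c + 1))" by simp
  then have x2: "x\<^sup>2 \<le> (4 * K0 / c) * x + (4 / c + 1)"
    using c by (simp only: mult_le_cancel_left_pos)
  have "x \<le> 4 * K0 / c + 4 / c + 1"
  proof (cases "x \<le> 1")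
    case True
    moreover have "0 \<le> 4 * K0 / c" "0 \<le> 4 / c" using c \<open>0 \<le> K0\<close> by simp_all
    ultimately show ?thesis by linarith
  next
    case False
    have "(4 / c + 1) * 1 \<le> (4 / c + 1) * x" using False c by (intro mult_left_mono) auto
    with x2 have "x * x \<le> (4 * K0 / c + 4 / c + 1) * x"
      by (simp add: power2_eq_square algebra_simps)
    from mult_right_le_imp_le[OF this] False show ?thesis by linarith
  qed
  then show ?thesis by (simp add: x_def)
qed

lemma norm_le_of_approx_projection:
  fixes u l z :: "real^'r" and J :: "real^'r^'r"
  assumes c: "0 < c" and pd: "\<And>v. c * (norm v)\<^sup>2 \<le> qform J v" and z: "J *v z = u"
    and u: "norm u \<le> K0" and proj: "qform J (l - z) \<le> qform J z + 1"
  shows "norm l \<le> K0 / c + sqrt ((K0 * (K0 / c) + 1) / c)"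
proof -
  have "0 \<le> K0" using u norm_ge_zero order_trans by blast
  have qz: "qform J z \<le> norm z * K0"
    unfolding qform_def z using norm_cauchy_schwarz[of z u] mult_left_mono[OF u norm_ge_zero[of z]]
    by linarith
  then have "c * norm z * norm z \<le> norm z * K0" using pd[of z] by (simp add: power2_eq_square)
  then have "c * norm z \<le> K0"
    using \<open>0 \<le> K0\<close> by (cases "norm z = 0") (auto simp: mult.commute mult.left_commute)
  then have z_le: "norm z \<le> K0 / c"
    using c by (simp add: field_simps)
  then have "qform J z \<le> K0 * (K0 / c)"
    using qz mult_right_mono[OF z_le, of K0] u norm_ge_zero[of u] by (simp add: mult.commute)
  then have "c * (norm (l - z))\<^sup>2 \<le> K0 * (K0 / c) + 1" using pd[of "l - z"] proj by linarith
  then have "norm (l - z) \<le> sqrt ((K0 * (K0 / c) + 1) / c)"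
    using c by (intro real_le_rsqrt) (simp add: field_simps)
  then show ?thesis using z_le norm_triangle_sub[of l z] by linarith
qed

lemma op_unif_of_vanishing_relative:
  assumes R: "\<forall>e>0. vanishing M (\<lambda>T. {\<omega>. \<exists>a\<in>A. e * (1 + L T a \<omega>)\<^sup>2 < \<bar>R T a \<omega>\<bar>})"
    and L: "bdd_in_prob M A L" and L_nonneg: "\<And>T a \<omega>. 0 \<le> L T a \<omega>"
  shows "op_unif M A R"
  unfolding op_unif_iff_vanishing vanishing_def
proof (intro allI impI)
  fix e d :: real assume "0 < e" "0 < d"
  then obtain K where K: "ev_outer_prob_less M (d/2) (\<lambda>T. {\<omega>. \<exists>a\<in>A. K < L T a \<omega>})"
    using L unfolding bdd_in_prob_def by (meson half_gt_zero)
  define e' where "e' = e / (1 + max K 0)\<^sup>2"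
  have "0 < e'" using \<open>0 < e\<close> by (simp add: e'_def add_pos_nonneg)
  then have "ev_outer_prob_less M (d/2) (\<lambda>T. {\<omega>. \<exists>a\<in>A. e' * (1 + L T a \<omega>)\<^sup>2 < \<bar>R T a \<omega>\<bar>})"
    using R \<open>0 < d\<close> unfolding vanishing_def by simp
  with K have "ev_outer_prob_less M (d/2 + d/2) (\<lambda>T. {\<omega>. \<exists>a\<in>A. K < L T a \<omega>}
      \<union> {\<omega>. \<exists>a\<in>A. e' * (1 + L T a \<omega>)\<^sup>2 < \<bar>R T a \<omega>\<bar>})"
    by (rule ev_outer_prob_less_Un)
  then show "ev_outer_prob_less M d (\<lambda>T. {\<omega>. \<exists>a\<in>A. e < \<bar>R T a \<omega>\<bar>})"
  proof (rule ev_outer_prob_less_mono, simp, intro always_eventually allI ballI impI)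
    fix T \<omega> assume "\<omega> \<in> {\<omega>. \<exists>a\<in>A. e < \<bar>R T a \<omega>\<bar>}"
    then obtain a where a: "a \<in> A" "e < \<bar>R T a \<omega>\<bar>" by blast
    show "\<omega> \<in> {\<omega>. \<exists>a\<in>A. K < L T a \<omega>} \<union> {\<omega>. \<exists>a\<in>A. e' * (1 + L T a \<omega>)\<^sup>2 < \<bar>R T a \<omega>\<bar>}"
    proof (cases "K < L T a \<omega>")
      case False
      then have "(1 + L T a \<omega>)\<^sup>2 \<le> (1 + max K 0)\<^sup>2"
        using L_nonneg[of T a \<omega>] by (intro power_mono) auto
      then have "e' * (1 + L T a \<omega>)\<^sup>2 \<le> e"
        using \<open>0 < e'\<close> mult_left_mono unfolding e'_def by (fastforce simp: field_simps)
      with a have "e' * (1 + L T a \<omega>)\<^sup>2 < \<bar>R T a \<omega>\<bar>" by linarith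
      with a(1) show ?thesis by blast
    qed (use a in auto)
  qed
qed

text \<open>The remainder condition only controls neighbourhoods of deterministic radii gamma_T tending
  to 0; a diagonal argument supplies radii that a consistent estimator respects with probability
  tending to one.\<close>
lemma vanishing_relative_remainder_at_consistent:
  fixes R :: "nat \<Rightarrow> 'a \<Rightarrow> 'z \<Rightarrow> 'w \<Rightarrow> real" and L :: "nat \<Rightarrow> 'a \<Rightarrow> 'z \<Rightarrow> real"
  assumes R: "\<forall>\<gamma> :: nat \<Rightarrow> real. (\<forall>T. 0 < \<gamma> T) \<and> \<gamma> \<longlonglongrightarrow> 0 \<longrightarrow>
        vanish_p M (\<lambda>T e. {\<omega>. \<exists>a\<in>A. \<exists>z\<in>Z a. dst a z \<le> \<gamma> T \<and> e < \<bar>R T a z \<omega>\<bar> / (1 + L T a z)\<^sup>2})"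
    and zh: "\<And>T a \<omega>. a \<in> A \<Longrightarrow> \<omega> \<in> space M \<Longrightarrow> zh T a \<omega> \<in> Z a"
    and consistent: "op_unif M A (\<lambda>T a \<omega>. dst a (zh T a \<omega>))"
    and L_nonneg: "\<And>T a z. 0 \<le> L T a z"
  shows "\<forall>e>0. vanishing M (\<lambda>T. {\<omega>. \<exists>a\<in>A. e * (1 + L T a (zh T a \<omega>))\<^sup>2 < \<bar>R T a (zh T a \<omega>) \<omega>\<bar>})"
proof (intro allI impI)
  fix e :: real assume "0 < e"
  obtain \<gamma> where \<gamma>: "\<forall>T. 0 < \<gamma> T" "\<gamma> \<longlonglongrightarrow> 0"
    and far: "vanishing M (\<lambda>T. {\<omega>. \<exists>a\<in>A. \<gamma> T < \<bar>dst a (zh T a \<omega>)\<bar>})"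
    using vanishing_diagonal[of M "\<lambda>T e. {\<omega>. \<exists>a\<in>A. e < \<bar>dst a (zh T a \<omega>)\<bar>}"] consistent
    unfolding op_unif_iff_vanishing by blast
  have "vanishing M (\<lambda>T. {\<omega>. \<exists>a\<in>A. \<exists>z\<in>Z a. dst a z \<le> \<gamma> T \<and> e < \<bar>R T a z \<omega>\<bar> / (1 + L T a z)\<^sup>2})"
    using R \<gamma> \<open>0 < e\<close> unfolding vanish_p_iff_vanishing by blast
  with far have "vanishing M (\<lambda>T. {\<omega>. \<exists>a\<in>A. \<gamma> T < \<bar>dst a (zh T a \<omega>)\<bar>} \<union>
      {\<omega>. \<exists>a\<in>A. \<exists>z\<in>Z a. dst a z \<le> \<gamma> T \<and> e < \<bar>R T a z \<omega>\<bar> / (1 + L T a z)\<^sup>2})"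
    by (rule vanishing_Un)
  then show "vanishing M (\<lambda>T. {\<omega>. \<exists>a\<in>A. e * (1 + L T a (zh T a \<omega>))\<^sup>2 < \<bar>R T a (zh T a \<omega>) \<omega>\<bar>})"
  proof (rule vanishing_mono, intro always_eventually allI ballI impI)
    fix T \<omega> assume \<omega>: "\<omega> \<in> space M"
      "\<omega> \<in> {\<omega>. \<exists>a\<in>A. e * (1 + L T a (zh T a \<omega>))\<^sup>2 < \<bar>R T a (zh T a \<omega>) \<omega>\<bar>}"
    then obtain a where a: "a \<in> A" and big: "e * (1 + L T a (zh T a \<omega>))\<^sup>2 < \<bar>R T a (zh T a \<omega>) \<omega>\<bar>"
      by blast
    have "0 < (1 + L T a (zh T a \<omega>))\<^sup>2" using L_nonneg[of T a "zh T a \<omega>"] by simp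
    with big have "e < \<bar>R T a (zh T a \<omega>) \<omega>\<bar> / (1 + L T a (zh T a \<omega>))\<^sup>2"
      by (simp add: less_divide_eq)
    with a zh[OF a \<omega>(1)] show "\<omega> \<in> {\<omega>. \<exists>a\<in>A. \<gamma> T < \<bar>dst a (zh T a \<omega>)\<bar>} \<union>
      {\<omega>. \<exists>a\<in>A. \<exists>z\<in>Z a. dst a z \<le> \<gamma> T \<and> e < \<bar>R T a z \<omega>\<bar> / (1 + L T a z)\<^sup>2}"
      by (cases "\<gamma> T < \<bar>dst a (zh T a \<omega>)\<bar>") auto
  qed
qed

lemma bdd_in_prob_of_quadratic_expansion:
  fixes u l :: "nat \<Rightarrow> 'a \<Rightarrow> 'w \<Rightarrow> real^'r" and R \<eta> :: "nat \<Rightarrow> 'a \<Rightarrow> 'w \<Rightarrow> real"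
    and J :: "'a \<Rightarrow> real^'r^'r"
  assumes c: "0 < c" and pd: "\<And>a v. a \<in> A \<Longrightarrow> c * (norm v)\<^sup>2 \<le> qform (J a) v"
    and lower: "\<And>T a \<omega>. a \<in> A \<Longrightarrow> \<omega> \<in> space M \<Longrightarrow>
      - \<bar>\<eta> T a \<omega>\<bar> \<le> u T a \<omega> \<bullet> l T a \<omega> - 1/2 * qform (J a) (l T a \<omega>) + R T a \<omega>"
    and \<eta>: "op_unif M A \<eta>"
    and R: "\<forall>e>0. vanishing M (\<lambda>T. {\<omega>. \<exists>a\<in>A. e * (1 + norm (l T a \<omega>))\<^sup>2 < \<bar>R T a \<omega>\<bar>})"
    and u: "bdd_in_prob M A (\<lambda>T a \<omega>. norm (u T a \<omega>))"
  shows "bdd_in_prob M A (\<lambda>T a \<omega>. norm (l T a \<omega>))"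
  unfolding bdd_in_prob_def
proof (intro allI impI)
  fix d :: real assume "0 < d"
  then obtain K0 where K0: "ev_outer_prob_less M (d/3) (\<lambda>T. {\<omega>. \<exists>a\<in>A. K0 < norm (u T a \<omega>)})"
    using u unfolding bdd_in_prob_def by (meson divide_pos_pos zero_less_numeral)
  have \<eta>_big: "ev_outer_prob_less M (d/3) (\<lambda>T. {\<omega>. \<exists>a\<in>A. 1 < \<bar>\<eta> T a \<omega>\<bar>})"
    using \<eta> \<open>0 < d\<close> unfolding op_unif_iff_vanishing vanishing_def by simp
  have "0 < c/8" "0 < d/3" using c \<open>0 < d\<close> by simp_all
  then have R_big:
    "ev_outer_prob_less M (d/3) (\<lambda>T. {\<omega>. \<exists>a\<in>A. c/8 * (1 + norm (l T a \<omega>))\<^sup>2 < \<bar>R T a \<omega>\<bar>})"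
    using R unfolding vanishing_def by blast
  have union: "ev_outer_prob_less M (d/3 + d/3 + d/3) (\<lambda>T. {\<omega>. \<exists>a\<in>A. K0 < norm (u T a \<omega>)}
      \<union> {\<omega>. \<exists>a\<in>A. 1 < \<bar>\<eta> T a \<omega>\<bar>} \<union> {\<omega>. \<exists>a\<in>A. c/8 * (1 + norm (l T a \<omega>))\<^sup>2 < \<bar>R T a \<omega>\<bar>})"
    by (intro ev_outer_prob_less_Un K0 \<eta>_big R_big)
  define K1 where "K1 = 4 * K0 / c + 4 / c + 1"
  have cover: "\<forall>\<omega>\<in>space M. \<omega> \<in> {\<omega>. \<exists>a\<in>A. K1 < norm (l T a \<omega>)} \<longrightarrow>
    \<omega> \<in> {\<omega>. \<exists>a\<in>A. K0 < norm (u T a \<omega>)} \<union> {\<omega>. \<exists>a\<in>A. 1 < \<bar>\<eta> T a \<omega>\<bar>}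
      \<union> {\<omega>. \<exists>a\<in>A. c/8 * (1 + norm (l T a \<omega>))\<^sup>2 < \<bar>R T a \<omega>\<bar>}" for T
  proof (intro ballI impI, rule ccontr)
    fix \<omega> assume \<omega>: "\<omega> \<in> space M" "\<omega> \<in> {\<omega>. \<exists>a\<in>A. K1 < norm (l T a \<omega>)}"
      and "\<omega> \<notin> {\<omega>. \<exists>a\<in>A. K0 < norm (u T a \<omega>)} \<union> {\<omega>. \<exists>a\<in>A. 1 < \<bar>\<eta> T a \<omega>\<bar>}
         \<union> {\<omega>. \<exists>a\<in>A. c/8 * (1 + norm (l T a \<omega>))\<^sup>2 < \<bar>R T a \<omega>\<bar>}"
    then obtain a where a: "a \<in> A" "K1 < norm (l T a \<omega>)" and
      small: "norm (u T a \<omega>) \<le> K0" "\<bar>\<eta> T a \<omega>\<bar> \<le> 1" "\<bar>R T a \<omega>\<bar> \<le> c/8 * (1 + norm (l T a \<omega>))\<^sup>2"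
      by (auto simp: not_less)
    have "norm (l T a \<omega>) \<le> K1"
      unfolding K1_def using lower[OF a(1) \<omega>(1), of T] small
      by (intro norm_le_of_quadratic_expansion[OF c pd[OF a(1)]]) auto
    with a(2) show False by simp
  qed
  have "ev_outer_prob_less M d (\<lambda>T. {\<omega>. \<exists>a\<in>A. K1 < norm (l T a \<omega>)})"
    using ev_outer_prob_less_mono[OF union _ always_eventually[OF allI[OF cover]]] by simp
  then show "\<exists>K. ev_outer_prob_less M d (\<lambda>T. {\<omega>. \<exists>a\<in>A. K < norm (l T a \<omega>)})" ..
qed

lemma bdd_in_prob_of_approx_projection:
  fixes u l z :: "nat \<Rightarrow> 'a \<Rightarrow> 'w \<Rightarrow> real^'r" and \<eta> :: "nat \<Rightarrow> 'a \<Rightarrow> 'w \<Rightarrow> real"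
    and J :: "'a \<Rightarrow> real^'r^'r"
  assumes c: "0 < c" and pd: "\<And>a v. a \<in> A \<Longrightarrow> c * (norm v)\<^sup>2 \<le> qform (J a) v"
    and z: "\<And>T a \<omega>. a \<in> A \<Longrightarrow> \<omega> \<in> space M \<Longrightarrow> J a *v z T a \<omega> = u T a \<omega>"
    and proj: "\<And>T a \<omega>. a \<in> A \<Longrightarrow> \<omega> \<in> space M \<Longrightarrow>
      qform (J a) (l T a \<omega> - z T a \<omega>) \<le> qform (J a) (z T a \<omega>) + \<bar>\<eta> T a \<omega>\<bar>"
    and \<eta>: "op_unif M A \<eta>"
    and u: "bdd_in_prob M A (\<lambda>T a \<omega>. norm (u T a \<omega>))"
  shows "bdd_in_prob M A (\<lambda>T a \<omega>. norm (l T a \<omega>))"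
  unfolding bdd_in_prob_def
proof (intro allI impI)
  fix d :: real assume "0 < d"
  then obtain K0 where K0: "ev_outer_prob_less M (d/2) (\<lambda>T. {\<omega>. \<exists>a\<in>A. K0 < norm (u T a \<omega>)})"
    using u unfolding bdd_in_prob_def by (meson half_gt_zero)
  have "ev_outer_prob_less M (d/2) (\<lambda>T. {\<omega>. \<exists>a\<in>A. 1 < \<bar>\<eta> T a \<omega>\<bar>})"
    using \<eta> \<open>0 < d\<close> unfolding op_unif_iff_vanishing vanishing_def by simp
  with K0 have union: "ev_outer_prob_less M (d/2 + d/2)
      (\<lambda>T. {\<omega>. \<exists>a\<in>A. K0 < norm (u T a \<omega>)} \<union> {\<omega>. \<exists>a\<in>A. 1 < \<bar>\<eta> T a \<omega>\<bar>})"
    by (rule ev_outer_prob_less_Un)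
  define K1 where "K1 = K0 / c + sqrt ((K0 * (K0 / c) + 1) / c)"
  have cover: "\<forall>\<omega>\<in>space M. \<omega> \<in> {\<omega>. \<exists>a\<in>A. K1 < norm (l T a \<omega>)} \<longrightarrow>
    \<omega> \<in> {\<omega>. \<exists>a\<in>A. K0 < norm (u T a \<omega>)} \<union> {\<omega>. \<exists>a\<in>A. 1 < \<bar>\<eta> T a \<omega>\<bar>}" for T
  proof (intro ballI impI, rule ccontr)
    fix \<omega> assume \<omega>: "\<omega> \<in> space M" "\<omega> \<in> {\<omega>. \<exists>a\<in>A. K1 < norm (l T a \<omega>)}"
      and "\<omega> \<notin> {\<omega>. \<exists>a\<in>A. K0 < norm (u T a \<omega>)} \<union> {\<omega>. \<exists>a\<in>A. 1 < \<bar>\<eta> T a \<omega>\<bar>}"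
    then obtain a where a: "a \<in> A" "K1 < norm (l T a \<omega>)" and
      small: "norm (u T a \<omega>) \<le> K0" "\<bar>\<eta> T a \<omega>\<bar> \<le> 1"
      by (auto simp: not_less)
    have "norm (l T a \<omega>) \<le> K1"
      unfolding K1_def using proj[OF a(1) \<omega>(1), of T] small
      by (intro norm_le_of_approx_projection[OF c pd[OF a(1)] z[OF a(1) \<omega>(1)]]) auto
    with a(2) show False by simp
  qed
  have "ev_outer_prob_less M d (\<lambda>T. {\<omega>. \<exists>a\<in>A. K1 < norm (l T a \<omega>)})"
    using ev_outer_prob_less_mono[OF union _ always_eventually[OF allI[OF cover]]] by simp
  then show "\<exists>K. ev_outer_prob_less M d (\<lambda>T. {\<omega>. \<exists>a\<in>A. K < norm (l T a \<omega>)})" ..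
qed

lemma op_unif_of_identification:
  fixes \<theta> :: "nat \<Rightarrow> 'a \<Rightarrow> 'w \<Rightarrow> real^'r" and D :: "nat \<Rightarrow> 'a \<Rightarrow> 'w \<Rightarrow> real"
  assumes bdd: "bdd_in_prob M A (\<lambda>T a \<omega>. norm (sqrt (real T) *\<^sub>R \<theta> T a \<omega>))"
    and ident: "\<And>e. 0 < e \<Longrightarrow> \<exists>\<delta>>0. \<forall>T. \<forall>a\<in>A. \<forall>\<omega>\<in>space M. e \<le> D T a \<omega> \<longrightarrow> \<delta> \<le> norm (\<theta> T a \<omega>)"
    and D_nonneg: "\<And>T a \<omega>. 0 \<le> D T a \<omega>"
  shows "op_unif M A D"
  unfolding op_unif_iff_vanishing vanishing_def
proof (intro allI impI)
  fix e d :: real assume "0 < e" "0 < d"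
  obtain \<delta> where \<delta>: "0 < \<delta>" "\<forall>T. \<forall>a\<in>A. \<forall>\<omega>\<in>space M. e \<le> D T a \<omega> \<longrightarrow> \<delta> \<le> norm (\<theta> T a \<omega>)"
    using ident[OF \<open>0 < e\<close>] by blast
  obtain K where K: "ev_outer_prob_less M d (\<lambda>T. {\<omega>. \<exists>a\<in>A. K < norm (sqrt (real T) *\<^sub>R \<theta> T a \<omega>)})"
    using bdd \<open>0 < d\<close> unfolding bdd_in_prob_def by blast
  obtain T0 :: nat where T0: "(max K 0 / \<delta>)\<^sup>2 < real T0" using reals_Archimedean2 by blast
  show "ev_outer_prob_less M d (\<lambda>T. {\<omega>. \<exists>a\<in>A. e < \<bar>D T a \<omega>\<bar>})"
  proof (rule ev_outer_prob_less_mono[OF K order_refl], unfold eventually_sequentially,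
      intro exI[of _ T0] allI impI ballI)
    fix T \<omega> assume "T0 \<le> T" "\<omega> \<in> space M" "\<omega> \<in> {\<omega>. \<exists>a\<in>A. e < \<bar>D T a \<omega>\<bar>}"
    then obtain a where a: "a \<in> A" "\<delta> \<le> norm (\<theta> T a \<omega>)" using \<delta>(2) D_nonneg by fastforce
    have "max K 0 / \<delta> < sqrt (real T)"
      using T0 \<open>T0 \<le> T\<close> real_less_rsqrt[of "max K 0 / \<delta>" "real T"] by simp
    then have "K < sqrt (real T) * \<delta>" using \<delta>(1) by (simp add: divide_less_eq mult.commute)
    also have "\<dots> \<le> norm (sqrt (real T) *\<^sub>R \<theta> T a \<omega>)" using a(2) by (simp add: mult_left_mono)
    finally show "\<omega> \<in> {\<omega>. \<exists>a\<in>A. K < norm (sqrt (real T) *\<^sub>R \<theta> T a \<omega>)}" using a(1) by blast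
  qed
qed

text \<open>L is the log-likelihood ratio against the true parameter zstar, lam the local parameter and
  Zn the paper's Z_{T alpha}.\<close>
lemma op_unif_quadratic_expansion_at_estimators:
  fixes I :: "'a \<Rightarrow> real^'r^'r" and U :: "nat \<Rightarrow> 'a \<Rightarrow> 'w \<Rightarrow> real^'r" and \<theta> :: "'a \<Rightarrow> 'z \<Rightarrow> real^'r"
    and L R :: "nat \<Rightarrow> 'a \<Rightarrow> 'z \<Rightarrow> 'w \<Rightarrow> real" and dst :: "'a \<Rightarrow> 'z \<Rightarrow> real"
    and zh zq :: "nat \<Rightarrow> 'a \<Rightarrow> 'w \<Rightarrow> 'z" and eps_h eps_q :: "nat \<Rightarrow> 'a \<Rightarrow> 'w \<Rightarrow> real"
  defines "lam T a z \<equiv> sqrt (real T) *\<^sub>R \<theta> a z" and "Zn T a \<omega> \<equiv> matrix_inv (I a) *v U T a \<omega>"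
  assumes c: "0 < c" and pd: "\<And>a v. a \<in> A \<Longrightarrow> c * (norm v)\<^sup>2 \<le> qform (I a) v"
    and sym: "\<And>a. a \<in> A \<Longrightarrow> transpose (I a) = I a"
    and U: "bdd_in_prob M A (\<lambda>T a \<omega>. norm (U T a \<omega>))"
    and expansion: "\<And>T a z \<omega>. a \<in> A \<Longrightarrow> \<omega> \<in> space M \<Longrightarrow>
      L T a z \<omega> = U T a \<omega> \<bullet> lam T a z - 1/2 * qform (I a) (lam T a z) + R T a z \<omega>"
    and R: "\<forall>\<gamma> :: nat \<Rightarrow> real. (\<forall>T. 0 < \<gamma> T) \<and> \<gamma> \<longlonglongrightarrow> 0 \<longrightarrow>
      vanish_p M (\<lambda>T e. {\<omega>. \<exists>a\<in>A. \<exists>z\<in>Z a. dst a z \<le> \<gamma> T \<and> e < \<bar>R T a z \<omega>\<bar> / (1 + norm (lam T a z))\<^sup>2})"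
    and ident: "\<And>e. 0 < e \<Longrightarrow> \<exists>\<delta>>0. \<forall>a\<in>A. \<forall>z\<in>Z a. e \<le> dst a z \<longrightarrow> \<delta> \<le> norm (\<theta> a z)"
    and dst_nonneg: "\<And>a z. 0 \<le> dst a z"
    and zstar: "\<And>a. a \<in> A \<Longrightarrow> zstar a \<in> Z a" "\<And>a. a \<in> A \<Longrightarrow> \<theta> a (zstar a) = 0"
      "\<And>T a \<omega>. a \<in> A \<Longrightarrow> \<omega> \<in> space M \<Longrightarrow> L T a (zstar a) \<omega> = 0"
    and zh: "\<And>T a \<omega>. a \<in> A \<Longrightarrow> \<omega> \<in> space M \<Longrightarrow> zh T a \<omega> \<in> Z a"
    and zh_consistent: "op_unif M A (\<lambda>T a \<omega>. dst a (zh T a \<omega>))"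
    and zh_max: "\<And>T a \<omega> z. a \<in> A \<Longrightarrow> \<omega> \<in> space M \<Longrightarrow> z \<in> Z a \<Longrightarrow>
      L T a z \<omega> \<le> L T a (zh T a \<omega>) \<omega> + \<bar>eps_h T a \<omega>\<bar>"
    and eps_h: "op_unif M A eps_h"
    and zq: "\<And>T a \<omega>. a \<in> A \<Longrightarrow> \<omega> \<in> space M \<Longrightarrow> zq T a \<omega> \<in> Z a"
    and zq_min: "\<And>T a \<omega> z. a \<in> A \<Longrightarrow> \<omega> \<in> space M \<Longrightarrow> z \<in> Z a \<Longrightarrow>
      qform (I a) (lam T a (zq T a \<omega>) - Zn T a \<omega>) \<le> qform (I a) (lam T a z - Zn T a \<omega>) + \<bar>eps_q T a \<omega>\<bar>"
    and eps_q: "op_unif M A eps_q"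
  shows "op_unif M A (\<lambda>T a \<omega>. L T a (zh T a \<omega>) \<omega>
    - (1/2 * qform (I a) (Zn T a \<omega>) - 1/2 * qform (I a) (lam T a (zq T a \<omega>) - Zn T a \<omega>)))"
proof -
  have Zn: "I a *v Zn T a \<omega> = U T a \<omega>" if "a \<in> A" for T a \<omega>
    unfolding Zn_def using matrix_inv_mult_cancel[OF c pd[OF that]] .
  have L_square: "L T a z \<omega> = 1/2 * qform (I a) (Zn T a \<omega>) - 1/2 * qform (I a) (lam T a z - Zn T a \<omega>)
      + R T a z \<omega>" if "a \<in> A" "\<omega> \<in> space M" for T a z \<omega>
    using expansion[OF that] qform_complete_square[OF sym[OF that(1)] Zn[OF that(1)]] by simp
  note R_rel = vanishing_relative_remainder_at_consistent[OF R _ _ norm_ge_zero]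
  have zh_lower: "- \<bar>eps_h T a \<omega>\<bar> \<le> L T a (zh T a \<omega>) \<omega>" if "a \<in> A" "\<omega> \<in> space M" for T a \<omega>
    using zh_max[of a \<omega> "zstar a" T] that zstar(1)[OF that(1)] zstar(3)[OF that] by simp
  have "bdd_in_prob M A (\<lambda>T a \<omega>. norm (lam T a (zh T a \<omega>)))"
    using zh_lower expansion zh by (intro bdd_in_prob_of_quadratic_expansion[OF c pd _ eps_h R_rel U])
      (auto intro: zh_consistent)
  then have Rh: "op_unif M A (\<lambda>T a \<omega>. R T a (zh T a \<omega>) \<omega>)"
    using R_rel[OF zh zh_consistent] by (intro op_unif_of_vanishing_relative) auto
  have "qform (I a) (lam T a (zq T a \<omega>) - Zn T a \<omega>) \<le> qform (I a) (Zn T a \<omega>) + \<bar>eps_q T a \<omega>\<bar>"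
    if "a \<in> A" "\<omega> \<in> space M" for T a \<omega>
    using zq_min[of a \<omega> "zstar a" T] that zstar(1)[OF that(1)] zstar(2)[OF that(1)]
    by (simp add: lam_def qform_minus)
  then have zq_bdd: "bdd_in_prob M A (\<lambda>T a \<omega>. norm (lam T a (zq T a \<omega>)))"
    using Zn by (intro bdd_in_prob_of_approx_projection[OF c pd _ _ eps_q U, where z=Zn]) auto
  have "op_unif M A (\<lambda>T a \<omega>. dst a (zq T a \<omega>))"
  proof (rule op_unif_of_identification[where \<theta>="\<lambda>T a \<omega>. \<theta> a (zq T a \<omega>)"])
    show "bdd_in_prob M A (\<lambda>T a \<omega>. norm (sqrt (real T) *\<^sub>R \<theta> a (zq T a \<omega>)))"
      using zq_bdd unfolding lam_def .
    show "\<exists>\<delta>>0. \<forall>T. \<forall>a\<in>A. \<forall>\<omega>\<in>space M. e \<le> dst a (zq T a \<omega>) \<longrightarrow> \<delta> \<le> norm (\<theta> a (zq T a \<omega>))"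
      if "0 < e" for e
      using ident[OF that] zq by metis
  qed (rule dst_nonneg)
  then have Rq: "op_unif M A (\<lambda>T a \<omega>. R T a (zq T a \<omega>) \<omega>)"
    using R_rel[OF zq] zq_bdd by (intro op_unif_of_vanishing_relative) auto
  have sandwich: "\<bar>L T a (zh T a \<omega>) \<omega>
      - (1/2 * qform (I a) (Zn T a \<omega>) - 1/2 * qform (I a) (lam T a (zq T a \<omega>) - Zn T a \<omega>))\<bar>
    \<le> \<bar>eps_h T a \<omega>\<bar> + \<bar>eps_q T a \<omega>\<bar> + \<bar>R T a (zh T a \<omega>) \<omega>\<bar> + \<bar>R T a (zq T a \<omega>) \<omega>\<bar>"
    if "a \<in> A" "\<omega> \<in> space M" for T a \<omega>
    using zh_max[of a \<omega> "zq T a \<omega>" T] zq_min[of a \<omega> "zh T a \<omega>" T]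
      that zq[OF that, of T] zh[OF that, of T]
      L_square[OF that, of T "zh T a \<omega>"] L_square[OF that, of T "zq T a \<omega>"] by linarith
  show ?thesis
    by (rule op_unif_abs_le[OF _ sandwich])
      (intro op_unif_add op_unif_abs eps_h eps_q Rh Rq)
qed

section \<open>The mixture autoregression\<close>

lemma std_normal_density_le_1: "std_normal_density x \<le> 1"
proof -
  have "1 / sqrt (2 * pi) \<le> 1" using pi_gt3 by (simp add: divide_le_eq)
  then show ?thesis unfolding std_normal_density_def
    by (intro mult_le_one) auto
qed

lemma ftd_pos: "0 < ph (Suc p) \<Longrightarrow> 0 < ftd p yy t ph"
  unfolding ftd_def Let_def by (simp add: normal_density_pos)

lemma ftd_le:
  assumes "m \<le> ph (Suc p)" "0 < m"
  shows "ftd p yy t ph \<le> 1 / sqrt m"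
  unfolding ftd_def Let_def using assms std_normal_density_le_1
  by (intro frac_le) (auto simp: normal_density_nonneg)

lemma ln_mixture_le:
  fixes w f g B :: real
  assumes "0 < w" "w < 1" "0 < f" "f \<le> B" "0 < g" "g \<le> B"
  shows "ln (w * f + (1 - w) * g) \<le> ln B"
proof -
  have "w * f + (1 - w) * g \<le> w * B + (1 - w) * B"
    using assms by (intro add_mono mult_left_mono) auto
  moreover have "0 < w * f + (1 - w) * g" using assms by (intro add_pos_pos mult_pos_pos) auto
  ultimately show ?thesis by (simp add: algebra_simps)
qed

lemma Assumption1_variance_lower_bound:
  assumes "Assumption1 M p q1 q2 sg y eps phs PhiT A B Phi mw"
  obtains m where "0 < m" "\<And>ph. ph \<in> PhiT \<Longrightarrow> m \<le> ph (Suc p)"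
proof -
  have cpt: "compact PhiT" and pos: "\<forall>ph\<in>PhiT. 0 < ph (Suc p)" and "phs \<in> vinterior (p + 2) PhiT"
    using assms unfolding Assumption1_def by simp_all
  then have ne: "PhiT \<noteq> {}" by (auto simp: vinterior_def)
  have "continuous_on PhiT (\<lambda>ph. ph (Suc p))"
    by (rule continuous_on_subset[OF continuous_on_product_coordinates]) simp
  then obtain ph0 where "ph0 \<in> PhiT" "\<forall>ph\<in>PhiT. ph0 (Suc p) \<le> ph (Suc p)"
    using continuous_attains_inf[OF cpt ne] by blast
  with pos show thesis using that[of "ph0 (Suc p)"] by blast
qed

lemma LT_bdd_above:
  assumes A1: "Assumption1 M p q1 q2 sg y eps phs PhiT A B Phi mw"
    and a: "a \<in> A" and \<omega>: "\<omega> \<in> space M"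
  shows "bdd_above ((\<lambda>x. LT p sg q1 y mw T a (fst x) (fst (snd x)) (snd (snd x)) \<omega>) ` (B \<times> Phi \<times> Phi))"
proof -
  obtain m where m: "0 < m" "\<And>ph. ph \<in> PhiT \<Longrightarrow> m \<le> ph (Suc p)"
    using Assumption1_variance_lower_bound[OF A1] by blast
  have vec: "B \<subseteq> vec q1" "Phi \<subseteq> vec q2"
    and iff: "\<forall>b\<in>vec q1. \<forall>ph\<in>vec q2. (b \<in> B \<and> ph \<in> Phi) \<longleftrightarrow> Pinv sg (vcat q1 b ph) \<in> PhiT"
    and mw: "\<forall>t. \<forall>a\<in>A. \<forall>b\<in>B. \<forall>ph\<in>Phi. \<forall>vp\<in>Phi.
        mw t a b ph vp \<in> borel_measurable (lag_sigma M y p t) \<and>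
        (\<forall>\<omega>\<in>space M. 0 < mw t a b ph vp \<omega> \<and> mw t a b ph vp \<omega> < 1)"
    using A1 unfolding Assumption1_def by simp_all
  have PhiT: "Pinv sg (vcat q1 b ph) \<in> PhiT" if "b \<in> B" "ph \<in> Phi" for b ph
    using iff vec that by blast
  have term_le: "ln (mw t a b ph vp \<omega> * ftd p yy t (Pinv sg (vcat q1 b ph))
      + (1 - mw t a b ph vp \<omega>) * ftd p yy t (Pinv sg (vcat q1 b vp))) \<le> ln (1 / sqrt m)"
    if "b \<in> B" "ph \<in> Phi" "vp \<in> Phi" for yy t b ph vp
  proof (rule ln_mixture_le)
    show "0 < mw t a b ph vp \<omega>" "mw t a b ph vp \<omega> < 1" using mw a \<omega> that by blast+
    show "0 < ftd p yy t (Pinv sg (vcat q1 b ph))" "0 < ftd p yy t (Pinv sg (vcat q1 b vp))"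
      using m PhiT that by (meson ftd_pos less_le_trans)+
    show "ftd p yy t (Pinv sg (vcat q1 b ph)) \<le> 1 / sqrt m"
      "ftd p yy t (Pinv sg (vcat q1 b vp)) \<le> 1 / sqrt m"
      using m PhiT that by (auto intro!: ftd_le)
  qed
  show ?thesis
  proof (rule bdd_aboveI2)
    fix x assume x: "x \<in> B \<times> Phi \<times> Phi"
    have "LT p sg q1 y mw T a (fst x) (fst (snd x)) (snd (snd x)) \<omega> \<le> (\<Sum>t\<in>{1..int T}. ln (1 / sqrt m))"
      unfolding LT_def using x by (intro sum_mono term_le) auto
    then show "LT p sg q1 y mw T a (fst x) (fst (snd x)) (snd (snd x)) \<omega> \<le> real T * ln (1 / sqrt m)"
      by simp
  qed
qed

lemma Assumption1_star_mem:
  assumes "Setting p q1 q2 sg" and "Assumption1 M p q1 q2 sg y eps phs PhiT A B Phi mw"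
  shows "bstar sg q1 phs \<in> B" "phstar sg q1 phs \<in> Phi"
proof -
  have perm: "sg permutes {..<p+2}" and q: "q1 + q2 = p + 2" using assms(1) by (auto simp: Setting_def)
  have "phs \<in> vinterior (p + 2) PhiT" and
    iff: "\<forall>b\<in>vec q1. \<forall>ph\<in>vec q2. (b \<in> B \<and> ph \<in> Phi) \<longleftrightarrow> Pinv sg (vcat q1 b ph) \<in> PhiT"
    using assms(2) unfolding Assumption1_def by simp_all
  then have phs: "phs \<in> PhiT" "phs \<in> vec (p + 2)" by (simp_all add: vinterior_def)
  have "bstar sg q1 phs \<in> vec q1" by (simp add: bstar_def vtake_def vec_def)
  moreover have "phstar sg q1 phs \<in> vec q2"
    unfolding vec_def
  proof (intro CollectI allI impI)
    fix i assume "q2 \<le> i"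
    then have "i + q1 \<notin> {..<p+2}" using q by auto
    then have "sg (i + q1) = i + q1" "phs (i + q1) = 0"
      using perm phs(2) by (auto simp: permutes_not_in vec_def)
    then show "phstar sg q1 phs i = 0" by (simp add: phstar_def vdrop_def Pmap_def)
  qed
  moreover have "vcat q1 (bstar sg q1 phs) (phstar sg q1 phs) = Pmap sg phs"
    by (rule ext) (simp add: vcat_def bstar_def phstar_def vtake_def vdrop_def)
  moreover have "Pinv sg (Pmap sg phs) = phs"
    by (rule ext) (simp add: Pinv_def Pmap_def permutes_inverses(1)[OF perm])
  ultimately have "bstar sg q1 phs \<in> B \<and> phstar sg q1 phs \<in> Phi"
    using iff phs(1) by simp
  then show "bstar sg q1 phs \<in> B" "phstar sg q1 phs \<in> Phi" by simp_all
qed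

lemma past_sigma_measurable:
  assumes "f \<in> borel_measurable (past_sigma M y T)" and "\<And>t. y t \<in> borel_measurable M"
  shows "f \<in> borel_measurable M"
proof (rule measurable_from_subalg[OF _ assms(1)])
  have "{y s -` X \<inter> space M | s X. s \<le> T \<and> X \<in> sets borel} \<subseteq> sets M"
    using assms(2) by (auto intro: measurable_sets)
  then show "subalgebra M (past_sigma M y T)"
    unfolding subalgebra_def past_sigma_def
    using sets.sigma_sets_subset[of _ M] by (auto simp: space_measure_of_conv sets_measure_of_conv)
qed

lemma Assumption5_qform_lower_bound:
  assumes "Assumption5 M p q1 q2 sg y phs A B Phi mw pimap piinv th s N S I"
  obtains c where "0 < c" "\<And>a v. a \<in> A \<Longrightarrow> c * (norm v)\<^sup>2 \<le> qform (I a) v"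
proof -
  have "\<exists>c>0. \<forall>a\<in>A. c \<le> lam_min (I a)" and "\<forall>a\<in>A. transpose (I a) = I a"
    using assms unfolding Assumption5_def by simp_all
  then obtain c where c: "0 < c" "\<forall>a\<in>A. c \<le> lam_min (I a)" "\<forall>a\<in>A. transpose (I a) = I a"
    by blast
  show thesis
  proof (rule that[OF c(1)])
    fix a v assume "a \<in> A"
    with c show "c * (norm v)\<^sup>2 \<le> qform (I a) v" by (intro qform_ge_lam_min) auto
  qed
qed

lemma Assumption5_score_bdd_in_prob:
  assumes A1: "Assumption1 M p q1 q2 sg y eps phs PhiT A B Phi mw"
    and A5: "Assumption5 M p q1 q2 sg y phs A B Phi mw pimap piinv th s N S I"
  shows "bdd_in_prob M A (\<lambda>T a \<omega>. norm ((1 / sqrt (real T)) *\<^sub>R ST s T a \<omega>))"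
proof (rule weak_conv_unif_bdd_in_prob)
  have y: "\<And>t. y t \<in> borel_measurable M" and "compact A" "prob_space M"
    using A1 unfolding Assumption1_def by simp_all
  then show "prob_space M" "compact A" by simp_all
  have ST: "\<forall>T. \<forall>a\<in>A. ST s T a \<in> borel_measurable (past_sigma M y (int T))"
    and "\<forall>T. \<forall>\<omega>\<in>space M. continuous_on A (\<lambda>a. ST s T a \<omega>)"
    and "weak_conv_unif A M (\<lambda>T a \<omega>. (1 / sqrt (real T)) *\<^sub>R ST s T a \<omega>) N S"
    and "prob_space N" and gp: "gaussian_process A N S" and "AE \<omega> in N. continuous_on A (\<lambda>a. S a \<omega>)"
    using A5 unfolding Assumption5_def by simp_all
  then show "prob_space N" "AE \<omega> in N. continuous_on A (\<lambda>a. S a \<omega>)"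
    "weak_conv_unif A M (\<lambda>T a \<omega>. (1 / sqrt (real T)) *\<^sub>R ST s T a \<omega>) N S"
    "\<And>T \<omega>. \<omega> \<in> space M \<Longrightarrow> continuous_on A (\<lambda>a. (1 / sqrt (real T)) *\<^sub>R ST s T a \<omega>)"
    by (auto intro: continuous_intros)
  show "(\<lambda>\<omega>. norm ((1 / sqrt (real T)) *\<^sub>R ST s T a \<omega>)) \<in> borel_measurable M" if "a \<in> A" for T a
    using past_sigma_measurable[OF bspec[OF spec[OF ST] that] y] by measurable
  show "(\<lambda>\<omega>. norm (S a \<omega>)) \<in> borel_measurable N" if "a \<in> A" for a
  proof -
    have "(\<lambda>\<omega>. S a \<omega> \<bullet> i) \<in> borel_measurable N" for i
      using gp that unfolding gaussian_process_def centered_normal_def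
      by (auto dest!: spec[of _ "{a}"] spec[of _ "\<lambda>_. i"] simp: inner_commute)
    then have "S a \<in> borel_measurable N" by (auto intro: borel_measurable_euclidean_space[THEN iffD2])
    then show ?thesis by measurable
  qed
qed

lemma LpiT_pimap:
  assumes "homeomorphism (Phi \<times> Phi) (pimap a ` (Phi \<times> Phi)) (pimap a) (piinv a)" "w \<in> Phi \<times> Phi"
  shows "LpiT p sg q1 y mw piinv T a b (fst (pimap a w)) (snd (pimap a w)) \<omega>
    = LT p sg q1 y mw T a b (fst w) (snd w) \<omega>"
  using homeomorphism_apply1[OF assms] by (simp add: LpiT_def)

lemma Assumption2_approx_max:
  assumes A1: "Assumption1 M p q1 q2 sg y eps phs PhiT A B Phi mw"
    and A2: "Assumption2 M p q1 q2 sg y phs A B Phi mw bh phh vph"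
    and A3: "Assumption3 M q1 q2 sg phs A Phi pimap piinv bh phh vph"
    and a: "a \<in> A" and \<omega>: "\<omega> \<in> space M" and z: "b \<in> B" "x \<in> pimap a ` (Phi \<times> Phi)"
  shows "LpiT p sg q1 y mw piinv T a b (fst x) (snd x) \<omega>
    \<le> LpiT p sg q1 y mw piinv T a (bh T a \<omega>) (fst (pimap a (phh T a \<omega>, vph T a \<omega>)))
         (snd (pimap a (phh T a \<omega>, vph T a \<omega>))) \<omega>
      + \<bar>LT p sg q1 y mw T a (bh T a \<omega>) (phh T a \<omega>) (vph T a \<omega>) \<omega>
         - (SUP x\<in>B \<times> Phi \<times> Phi. LT p sg q1 y mw T a (fst x) (fst (snd x)) (snd (snd x)) \<omega>)\<bar>"
proof -
  have homeo: "homeomorphism (Phi \<times> Phi) (pimap a ` (Phi \<times> Phi)) (pimap a) (piinv a)"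
    using A3 a unfolding Assumption3_def by blast
  have hat: "bh T a \<omega> \<in> B" "(phh T a \<omega>, vph T a \<omega>) \<in> Phi \<times> Phi"
    using A2 a \<omega> unfolding Assumption2_def by auto
  obtain w where w: "w \<in> Phi \<times> Phi" "x = pimap a w" using z(2) by blast
  have "LT p sg q1 y mw T a b (fst w) (snd w) \<omega>
      \<le> (SUP x\<in>B \<times> Phi \<times> Phi. LT p sg q1 y mw T a (fst x) (fst (snd x)) (snd (snd x)) \<omega>)"
    using cSUP_upper[OF _ LT_bdd_above[OF A1 a \<omega>], of "(b, w)" T] z(1) w(1) by simp
  moreover have
    "LpiT p sg q1 y mw piinv T a b (fst x) (snd x) \<omega> = LT p sg q1 y mw T a b (fst w) (snd w) \<omega>"
    using LpiT_pimap[where a=a and pimap=pimap and piinv=piinv, OF homeo w(1)] w(2) by simp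
  moreover have "LpiT p sg q1 y mw piinv T a (bh T a \<omega>) (fst (pimap a (phh T a \<omega>, vph T a \<omega>)))
      (snd (pimap a (phh T a \<omega>, vph T a \<omega>))) \<omega>
    = LT p sg q1 y mw T a (bh T a \<omega>) (phh T a \<omega>) (vph T a \<omega>) \<omega>"
    using LpiT_pimap[where a=a and pimap=pimap and piinv=piinv, OF homeo hat(2)] by simp
  ultimately show ?thesis by linarith
qed

lemma qform_le_INF_scaled_image:
  fixes J :: "real^'r^'r"
  assumes "z \<in> Z" and "\<And>v. 0 \<le> qform J v"
  shows "q \<le> qform J (t *\<^sub>R f z - w) + \<bar>q - (INF l\<in>(\<lambda>x. t *\<^sub>R x) ` (f ` Z). qform J (l - w))\<bar>"
proof -
  have "(INF l\<in>(\<lambda>x. t *\<^sub>R x) ` (f ` Z). qform J (l - w)) \<le> qform J (t *\<^sub>R f z - w)"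
    using assms by (intro cINF_lower bdd_belowI2[where m=0]) auto
  then show ?thesis by linarith
qed

theorem lemma2:
  fixes M :: "'w measure" and N :: "'v measure"
    and p q1 q2 :: nat and sg :: "nat \<Rightarrow> nat"
    and y eps :: "int \<Rightarrow> 'w \<Rightarrow> real"
    and phs :: "nat \<Rightarrow> real" and PhiT B Phi :: "(nat \<Rightarrow> real) set"
    and A :: "'a::euclidean_space set"
    and mw :: "int \<Rightarrow> 'a \<Rightarrow> (nat \<Rightarrow> real) \<Rightarrow> (nat \<Rightarrow> real) \<Rightarrow> (nat \<Rightarrow> real) \<Rightarrow> 'w \<Rightarrow> real"
    and bh phh vph bq piq vq :: "nat \<Rightarrow> 'a \<Rightarrow> 'w \<Rightarrow> (nat \<Rightarrow> real)"
    and pimap piinv :: "'a \<Rightarrow> (nat \<Rightarrow> real) \<times> (nat \<Rightarrow> real) \<Rightarrow> (nat \<Rightarrow> real) \<times> (nat \<Rightarrow> real)"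
    and th :: "'a \<Rightarrow> (nat \<Rightarrow> real) \<Rightarrow> (nat \<Rightarrow> real) \<Rightarrow> (nat \<Rightarrow> real) \<Rightarrow> real^'r::finite"
    and s :: "nat \<Rightarrow> 'a \<Rightarrow> 'w \<Rightarrow> real^'r"
    and S :: "'a \<Rightarrow> 'v \<Rightarrow> real^'r"
    and I :: "'a \<Rightarrow> real^'r^'r"
  assumes setting: "Setting p q1 q2 sg"
    and A1: "Assumption1 M p q1 q2 sg y eps phs PhiT A B Phi mw"
    and A2: "Assumption2 M p q1 q2 sg y phs A B Phi mw bh phh vph"
    and A3: "Assumption3 M q1 q2 sg phs A Phi pimap piinv bh phh vph"
    and A4: "Assumption4 M q1 q2 A B Phi mw pimap piinv"
    and A5: "Assumption5 M p q1 q2 sg y phs A B Phi mw pimap piinv th s N S I"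
    and q_in: "\<forall>T. \<forall>a\<in>A. \<forall>\<omega>\<in>space M. bq T a \<omega> \<in> B \<and> (piq T a \<omega>, vq T a \<omega>) \<in> pimap a ` (Phi \<times> Phi)"
    and q_min: "op_unif M A (\<lambda>T a \<omega>.
        qform (I a) (sqrt (real T) *\<^sub>R th a (bq T a \<omega>) (piq T a \<omega>) (vq T a \<omega>)
                     - matrix_inv (I a) *v ((1 / sqrt (real T)) *\<^sub>R ST s T a \<omega>))
        - (INF l\<in>(\<lambda>x. sqrt (real T) *\<^sub>R x) ` ((\<lambda>(b, x). th a b (fst x) (snd x)) ` (B \<times> pimap a ` (Phi \<times> Phi))).
             qform (I a) (l - matrix_inv (I a) *v ((1 / sqrt (real T)) *\<^sub>R ST s T a \<omega>))))"
  shows "op_unif M A (\<lambda>T a \<omega>.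
        (LpiT p sg q1 y mw piinv T a (bh T a \<omega>)
              (fst (pimap a (phh T a \<omega>, vph T a \<omega>))) (snd (pimap a (phh T a \<omega>, vph T a \<omega>))) \<omega>
         - LpiT p sg q1 y mw piinv T a (bstar sg q1 phs) (phstar sg q1 phs) vzero \<omega>)
        - ((1/2) * qform (I a) (matrix_inv (I a) *v ((1 / sqrt (real T)) *\<^sub>R ST s T a \<omega>))
           - (1/2) * qform (I a) (sqrt (real T) *\<^sub>R th a (bq T a \<omega>) (piq T a \<omega>) (vq T a \<omega>)
                                  - matrix_inv (I a) *v ((1 / sqrt (real T)) *\<^sub>R ST s T a \<omega>))))"
proof -
  let ?bs = "bstar sg q1 phs" and ?ps = "phstar sg q1 phs"
  let ?U = "\<lambda>T a \<omega>. (1 / sqrt (real T)) *\<^sub>R ST s T a \<omega>"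
  obtain c where c: "0 < c" "\<And>a v. a \<in> A \<Longrightarrow> c * (norm v)\<^sup>2 \<le> qform (I a) v"
    using Assumption5_qform_lower_bound[OF A5] by blast
  then have psd: "\<And>a v. a \<in> A \<Longrightarrow> 0 \<le> qform (I a) v"
    by (meson order_trans mult_nonneg_nonneg zero_le_power2 less_imp_le)
  show ?thesis
    apply (rule op_unif_abs_le[OF op_unif_abs[OF op_unif_quadratic_expansion_at_estimators[where
        Z = "\<lambda>a. B \<times> pimap a ` (Phi \<times> Phi)" and \<theta> = "\<lambda>a z. th a (fst z) (fst (snd z)) (snd (snd z))"
        and L = "\<lambda>T a z \<omega>. LpiT p sg q1 y mw piinv T a (fst z) (fst (snd z)) (snd (snd z)) \<omega>
                        - LpiT p sg q1 y mw piinv T a ?bs ?ps vzero \<omega>"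
        and R = "\<lambda>T a z. RT p sg q1 y mw piinv phs th s I T a (fst z) (fst (snd z)) (snd (snd z))"
        and dst = "\<lambda>a z. dist3 q1 q2 (fst z) (fst (snd z)) (snd (snd z)) ?bs ?ps vzero"
        and zstar = "\<lambda>a. (?bs, ?ps, vzero)" and U = ?U and I = I
        and zh = "\<lambda>T a \<omega>. (bh T a \<omega>, pimap a (phh T a \<omega>, vph T a \<omega>))"
        and zq = "\<lambda>T a \<omega>. (bq T a \<omega>, piq T a \<omega>, vq T a \<omega>)"
        and eps_h = "\<lambda>T a \<omega>. LT p sg q1 y mw T a (bh T a \<omega>) (phh T a \<omega>) (vph T a \<omega>) \<omega>
          - (SUP x\<in>B \<times> Phi \<times> Phi. LT p sg q1 y mw T a (fst x) (fst (snd x)) (snd (snd x)) \<omega>)"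
        and eps_q = "\<lambda>T a \<omega>. qform (I a) (sqrt (real T) *\<^sub>R th a (bq T a \<omega>) (piq T a \<omega>) (vq T a \<omega>)
            - matrix_inv (I a) *v ?U T a \<omega>)
          - (INF l\<in>(\<lambda>x. sqrt (real T) *\<^sub>R x) ` ((\<lambda>(b, x). th a b (fst x) (snd x)) ` (B \<times> pimap a ` (Phi \<times> Phi))).
              qform (I a) (l - matrix_inv (I a) *v ?U T a \<omega>))", OF c(1)]]])
    subgoal by (rule c(2))
    subgoal using A5 unfolding Assumption5_def by blast
    subgoal by (rule Assumption5_score_bdd_in_prob[OF A1 A5])
    subgoal by (simp add: RT_def)
    subgoal using A5 unfolding Assumption5_def by simp
    subgoal using A5 unfolding Assumption5_def by simp
    subgoal by (simp add: dist3_def)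
    subgoal using Assumption1_star_mem[OF setting A1] A3 unfolding Assumption3_def by force
    subgoal using A5 unfolding Assumption5_def by simp
    subgoal by simp
    subgoal using A2 unfolding Assumption2_def by simp
    subgoal using A3 unfolding Assumption3_def by simp
    subgoal using Assumption2_approx_max[OF A1 A2 A3] by force
    subgoal using A2 unfolding Assumption2_def by simp
    subgoal using q_in by blast
    subgoal for T a \<omega> z
      using qform_le_INF_scaled_image[of z "B \<times> pimap a ` (Phi \<times> Phi)" "I a" _ "sqrt (real T)"
          "\<lambda>(b, x). th a b (fst x) (snd x)"] psd
      by (simp add: split_beta)
    subgoal by (rule q_min)
    by simp
qed

end
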